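(* There exists an absolute constant $C>0$ such that the following holds. Let $n\ge1$, let $S=\{\tau_1,\dots,\tau_{|S|}\}\subset[0,1)$ be finite with minimum separation $\Delta$ satisfying $\Delta\ge C\,\lambda_c\log|S|$, where $\lambda_c=1/n$, and consider the measure $\mu=\sum_{\tau\in S}\delta_\tau$. Then the $2|S|\times2|S|$ matrix $$\begin{pmatrix} D_0 & \frac{1}{\sqrt{|D_N''(0)|}}D_1\\[2pt] -\frac{1}{\sqrt{|D_N''(0)|}}D_1 & -\frac{1}{|D_N''(0)|}D_2\end{pmatrix}$$ is invertible, so that there are unique $a,b\in\mathbb{C}^{|S|}$ with $$\begin{pmatrix} D_0 & \frac{1}{\sqrt{|D_N''(0)|}}D_1\\ -\frac{1}{\sqrt{|D_N''(0)|}}D_1 & -\frac{1}{|D_N''(0)|}D_2\end{pmatrix}\begin{pmatrix} a\\ b\sqrt{|D_N''(0)|}\end{pmatrix}=\begin{pmatrix} v\\ 0\end{pmatrix},\qquad v=(1,\dots,1)^T,$$ and the trigonometric polynomial $\eta(\theta)=\sum_{k}a_k D_N(\theta-\tau_k)+\sum_k b_k D_N'(\theta-\tau_k)$ satisfies $|\eta(\theta)|\le1$ for all $\theta\in[0,1]$ and $\eta(\tau)=1$ for every $\tau\in S$.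
   Context: $D_N(\theta)=\frac{1}{2n+1}\sum_{k=-n}^{n}e^{2\pi i k\theta}$ is the normalized Dirichlet kernel, with derivatives $D_N',D_N''$. $(D_0)_{jk}=D_N(\tau_j-\tau_k)$, $(D_1)_{jk}=D_N'(\tau_j-\tau_k)$, $(D_2)_{jk}=D_N''(\tau_j-\tau_k)$. For $x\in\mathbb{R}$, $|x|_{\mathrm{mod}\,1}=\min_{m\in\mathbb{Z}}|x-m|$; $\Delta=\min_{\tau\neq\tau'\in S}|\tau-\tau'|_{\mathrm{mod}\,1}$ (with $\Delta=+\infty$ if $|S|=1$). The paper's hypothesis "$\Delta\gtrsim\lambda_c\log(S)$" is rendered as $\Delta\ge C\lambda_c\log|S|$ for an absolute constant $C$. *)

theory Defs
  imports "HOL-Analysis.Analysis" "Jordan_Normal_Form.Matrix"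
begin

definition dirichlet :: "nat \<Rightarrow> real \<Rightarrow> complex" where
  "dirichlet n \<theta> = (1 / of_nat (2 * n + 1)) *
     (\<Sum>k\<in>{-int n..int n}. exp (2 * of_real pi * \<i> * of_int k * of_real \<theta>))"

definition dirichlet1 :: "nat \<Rightarrow> real \<Rightarrow> complex" where
  "dirichlet1 n \<theta> = vector_derivative (dirichlet n) (at \<theta>)"

definition dirichlet2 :: "nat \<Rightarrow> real \<Rightarrow> complex" where
  "dirichlet2 n \<theta> = vector_derivative (dirichlet1 n) (at \<theta>)"

definition abs_mod1 :: "real \<Rightarrow> real" where
  "abs_mod1 x = Inf {\<bar>x - of_int m\<bar> | m. True}"

definition kmat :: "(real \<Rightarrow> complex) \<Rightarrow> nat \<Rightarrow> (nat \<Rightarrow> real) \<Rightarrow> complex mat" where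
  "kmat f m \<tau> = mat m m (\<lambda>(j, k). f (\<tau> j - \<tau> k))"

end

theory Submission
  imports Defs "Jordan_Normal_Form.Determinant"
begin

text \<open>Written as real cosine sums, the Dirichlet kernel and its derivatives decay away from \<open>0\<close>:
  summation by parts bounds the \<open>p\<close>-th derivative at \<open>x\<close> by a multiple of
  \<open>(2 \<pi> n) ^ p / (n * abs_mod1 x)\<close>. Nodes at mutual distance \<open>\<Delta>\<close> fall into distinct bins of
  width \<open>\<Delta> / 2\<close>, so summing \<open>1 / abs_mod1 (\<theta> - \<tau> k)\<close> over all nodes but the nearest one gives a
  harmonic sum, at most \<open>6 (1 + log |S|) / \<Delta>\<close>. For \<open>\<Delta> \<ge> 10 ^ 6 log |S| / n\<close> the contributions of
  the distant nodes are therefore tiny: the normalized interpolation matrix has unit diagonal and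
  off-diagonal row sums at most \<open>5 \<epsilon>\<close>, so it is invertible and its solution is real with \<open>a\<close> close
  to \<open>1\<close> and \<open>b\<close> close to \<open>0\<close>. Within \<open>1 / (4 (2 n + 1))\<close> of a node the negative curvature
  \<open>D\<^sub>N''(0)\<close> dominates, so \<open>\<eta>'' < 0\<close> there, and \<open>\<eta> = 1\<close>, \<open>\<eta>' = 0\<close> at the node give \<open>\<eta> \<le> 1\<close>;
  further away \<open>|\<eta>| \<le> |D\<^sub>N| + O(\<epsilon>)\<close> with \<open>|D\<^sub>N| \<le> 49 / 50\<close>.\<close>

text \<open>\<open>dirichlet_deriv p n\<close> is the \<open>p\<close>-th derivative of \<open>D\<^sub>N\<close> as a real cosine sum: each
  differentiation shifts the phase by \<open>\<pi>/2\<close>, and the constant term \<open>0 ^ p\<close> survives only for \<open>p = 0\<close>.\<close>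

definition dirichlet_deriv :: "nat \<Rightarrow> nat \<Rightarrow> real \<Rightarrow> real" where
  "dirichlet_deriv p n x =
     (0 ^ p + 2 * (\<Sum>k=1..n. (2 * pi * real k) ^ p * cos (2 * pi * real k * x + real p * pi / 2)))
     / real (2 * n + 1)"

lemma cos_phase_has_real_derivative:
  "((\<lambda>x. c ^ p * cos (c * x + real p * pi / 2)) has_real_derivative
     c ^ Suc p * cos (c * x + real (Suc p) * pi / 2)) (at x)"
proof -
  have "cos (c * x + real (Suc p) * pi / 2) = - sin (c * x + real p * pi / 2)"
    by (simp add: minus_sin_cos_eq add_divide_distrib algebra_simps)
  then show ?thesis by (auto intro!: derivative_eq_intros)
qed

lemma dirichlet_deriv_has_real_derivative:
  "(dirichlet_deriv p n has_real_derivative dirichlet_deriv (Suc p) n x) (at x)"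
proof -
  have "((\<lambda>x. \<Sum>k=1..n. (2 * pi * real k) ^ p * cos (2 * pi * real k * x + real p * pi / 2))
        has_real_derivative
        (\<Sum>k=1..n. (2 * pi * real k) ^ Suc p * cos (2 * pi * real k * x + real (Suc p) * pi / 2)))
        (at x)"
    by (intro DERIV_sum cos_phase_has_real_derivative)
  then have "((\<lambda>x. (0 ^ p + 2 * (\<Sum>k=1..n. (2 * pi * real k) ^ p * cos (2 * pi * real k * x + real p * pi / 2)))
        / real (2 * n + 1)) has_real_derivative
        (0 + 2 * (\<Sum>k=1..n. (2 * pi * real k) ^ Suc p * cos (2 * pi * real k * x + real (Suc p) * pi / 2)))
        / real (2 * n + 1)) (at x)"
    by (intro DERIV_cdivide DERIV_add DERIV_cmult DERIV_const)
  then show ?thesis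
    unfolding dirichlet_deriv_def[abs_def] by simp
qed

lemma dirichlet_deriv_chain:
  "(g has_real_derivative g') (at x) \<Longrightarrow>
     ((\<lambda>x. dirichlet_deriv p n (g x)) has_real_derivative dirichlet_deriv (Suc p) n (g x) * g') (at x)"
  by (rule DERIV_chain2[OF dirichlet_deriv_has_real_derivative])

lemma sum_exp_eq_cos_sum:
  "(\<Sum>k\<in>{-int n..int n}. exp (\<i> * of_int k * of_real t)) = of_real (1 + 2 * (\<Sum>k=1..n. cos (real k * t)))"
proof (induction n)
  case (Suc n)
  have "{-int (Suc n)..int (Suc n)} = insert (-int (Suc n)) (insert (int (Suc n)) {-int n..int n})"
    by auto
  moreover have "exp (\<i> * of_int (int (Suc n)) * of_real t) + exp (\<i> * of_int (-int (Suc n)) * of_real t)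
        = of_real (2 * cos (real (Suc n) * t))"
    by (simp add: cos_exp_eq cos_of_real[symmetric] algebra_simps del: of_nat_Suc)
  ultimately show ?case using Suc by (simp add: algebra_simps del: of_nat_Suc)
qed simp

lemma dirichlet_eq: "dirichlet n = (\<lambda>x. of_real (dirichlet_deriv 0 n x))"
proof
  fix x
  have "(\<Sum>k\<in>{-int n..int n}. exp (2 * of_real pi * \<i> * of_int k * of_real x))
      = (\<Sum>k\<in>{-int n..int n}. exp (\<i> * of_int k * of_real (2 * pi * x)))"
    by (intro sum.cong) (auto simp: algebra_simps)
  then show "dirichlet n x = of_real (dirichlet_deriv 0 n x)"
    unfolding dirichlet_def dirichlet_deriv_def sum_exp_eq_cos_sum
    by (simp add: mult_ac add_divide_distrib)
qed

lemma dirichlet1_eq: "dirichlet1 n = (\<lambda>x. of_real (dirichlet_deriv 1 n x))"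
  unfolding dirichlet1_def dirichlet_eq
  by (intro ext vector_derivative_at has_vector_derivative_of_real)
    (use dirichlet_deriv_has_real_derivative[of 0] in simp)

lemma dirichlet2_eq: "dirichlet2 n = (\<lambda>x. of_real (dirichlet_deriv 2 n x))"
  unfolding dirichlet2_def dirichlet1_eq
  by (intro ext vector_derivative_at has_vector_derivative_of_real)
    (use dirichlet_deriv_has_real_derivative[of 1] in \<open>simp add: numeral_2_eq_2\<close>)

lemma dirichlet_deriv_add_of_int: "dirichlet_deriv p n (x + of_int j) = dirichlet_deriv p n x"
proof -
  have "cos (2 * pi * real k * (x + of_int j) + c) = cos (2 * pi * real k * x + c)" for k c
  proof -
    have "2 * pi * real k * (x + of_int j) + c = (2 * pi * real k * x + c) + 2 * pi * of_int (int k * j)"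
      by (simp add: algebra_simps)
    then show ?thesis by (simp only: cos_add cos_int_2pin sin_int_2pin) simp
  qed
  then show ?thesis unfolding dirichlet_deriv_def by simp
qed

lemma dirichlet_deriv_0_minus: "dirichlet_deriv 0 n (- x) = dirichlet_deriv 0 n x"
  unfolding dirichlet_deriv_def by simp

lemma dirichlet_deriv_0_eq:
  "dirichlet_deriv 0 n x = (1 + 2 * (\<Sum>k=1..n. cos (2 * pi * real k * x))) / real (2 * n + 1)"
  unfolding dirichlet_deriv_def by simp

lemma dirichlet_deriv_2_eq:
  "dirichlet_deriv 2 n x =
     - 2 * (\<Sum>k=1..n. (2 * pi * real k) ^ 2 * cos (2 * pi * real k * x)) / real (2 * n + 1)"
  unfolding dirichlet_deriv_def by (simp del: One_nat_def add: sum_negf)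

definition dirichlet_curvature :: "nat \<Rightarrow> real" where
  "dirichlet_curvature n = 4 * pi ^ 2 * real n * (real n + 1) / 3"

lemma dirichlet_curvature_nonneg: "0 \<le> dirichlet_curvature n"
  unfolding dirichlet_curvature_def by simp

lemma dirichlet_curvature_pos: "n \<ge> 1 \<Longrightarrow> 0 < dirichlet_curvature n"
  unfolding dirichlet_curvature_def by simp

lemma two_pi_n_squared_le_curvature: "(2 * pi * real n) ^ 2 \<le> 3 * dirichlet_curvature n"
  unfolding dirichlet_curvature_def by (simp add: power2_eq_square algebra_simps)

lemma two_pi_n_le_sqrt_curvature: "2 * pi * real n \<le> 2 * sqrt (dirichlet_curvature n)"
proof -
  have "2 * pi * real n \<le> sqrt (4 * dirichlet_curvature n)"
    using two_pi_n_squared_le_curvature[of n] dirichlet_curvature_nonneg[of n] by (intro real_le_rsqrt) simp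
  then show ?thesis by (simp add: real_sqrt_mult)
qed

lemma sum_two_pi_k_squared:
  "(\<Sum>k=1..n. (2 * pi * real k) ^ 2) = dirichlet_curvature n * real (2 * n + 1) / 2"
proof -
  have "(\<Sum>k=1..n. (2 * pi * real k) ^ 2) = 4 * pi ^ 2 * (\<Sum>k=1..n. real k ^ 2)"
    by (simp add: sum_distrib_left power_mult_distrib)
  also have "(\<Sum>k=1..n. real k ^ 2) = real n * (real n + 1) * (2 * real n + 1) / 6"
    by (induction n) (auto simp: algebra_simps power2_eq_square add_divide_distrib)
  finally show ?thesis unfolding dirichlet_curvature_def by (simp add: field_simps)
qed

lemma dirichlet_deriv_0_at_0: "dirichlet_deriv 0 n 0 = 1"
  unfolding dirichlet_deriv_0_eq by simp

lemma dirichlet_deriv_1_at_0: "dirichlet_deriv 1 n 0 = 0"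
  unfolding dirichlet_deriv_def by simp

lemma dirichlet_deriv_2_at_0: "dirichlet_deriv 2 n 0 = - dirichlet_curvature n"
  unfolding dirichlet_deriv_2_eq by (simp del: One_nat_def add: sum_two_pi_k_squared)

lemma cmod_dirichlet2_0: "cmod (dirichlet2 n 0) = dirichlet_curvature n"
  using dirichlet_curvature_nonneg[of n] unfolding dirichlet2_eq dirichlet_deriv_2_at_0 by simp

lemma abs_dirichlet_deriv_0_le: "\<bar>dirichlet_deriv 0 n x\<bar> \<le> 1"
proof -
  have "\<bar>\<Sum>k=1..n. cos (2 * pi * real k * x)\<bar> \<le> (\<Sum>k=1..n. \<bar>cos (2 * pi * real k * x)\<bar>)"
    by (rule sum_abs)
  also have "\<dots> \<le> real n" using sum_mono[of "{1..n}" "\<lambda>k. \<bar>cos (2 * pi * real k * x)\<bar>" "\<lambda>_. 1"] by simp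
  finally have "\<bar>1 + 2 * (\<Sum>k=1..n. cos (2 * pi * real k * x))\<bar> \<le> real (2 * n + 1)" by linarith
  then show ?thesis unfolding dirichlet_deriv_0_eq by (simp add: divide_le_eq_1)
qed

lemma abs_dirichlet_deriv_Suc_le:
  "\<bar>dirichlet_deriv (Suc p) n x\<bar>
     \<le> 2 * pi * real n * (2 * (\<Sum>k=1..n. (2 * pi * real k) ^ p) / real (2 * n + 1))"
proof -
  let ?c = "\<lambda>k. cos (2 * pi * real k * x + real (Suc p) * pi / 2)"
  have "\<bar>\<Sum>k=1..n. (2 * pi * real k) ^ Suc p * ?c k\<bar> \<le> (\<Sum>k=1..n. \<bar>(2 * pi * real k) ^ Suc p * ?c k\<bar>)"
    by (rule sum_abs)
  also have "\<dots> \<le> (\<Sum>k=1..n. 2 * pi * real n * (2 * pi * real k) ^ p)"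
  proof (intro sum_mono)
    fix k assume k: "k \<in> {1..n}"
    then have "\<bar>(2 * pi * real k) ^ Suc p * ?c k\<bar> \<le> 2 * pi * real k * (2 * pi * real k) ^ p"
      by (auto simp: abs_mult intro!: mult_left_le)
    also have "\<dots> \<le> 2 * pi * real n * (2 * pi * real k) ^ p"
      using k by (intro mult_right_mono) auto
    finally show "\<bar>(2 * pi * real k) ^ Suc p * ?c k\<bar> \<le> 2 * pi * real n * (2 * pi * real k) ^ p" .
  qed
  finally have "2 * \<bar>\<Sum>k=1..n. (2 * pi * real k) ^ Suc p * ?c k\<bar> / real (2 * n + 1)
      \<le> 2 * (\<Sum>k=1..n. 2 * pi * real n * (2 * pi * real k) ^ p) / real (2 * n + 1)"
    by (intro divide_right_mono) auto
  then show ?thesis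
    unfolding dirichlet_deriv_def by (simp add: abs_mult sum_distrib_left[symmetric] mult_ac)
qed

lemma abs_dirichlet_deriv_1_le: "\<bar>dirichlet_deriv 1 n x\<bar> \<le> 2 * pi * real n"
proof -
  have "\<bar>dirichlet_deriv 1 n x\<bar> \<le> 2 * pi * real n * (2 * real n / real (2 * n + 1))"
    using abs_dirichlet_deriv_Suc_le[of 0 n x] by simp
  also have "\<dots> \<le> 2 * pi * real n * 1"
    by (intro mult_left_mono) auto
  finally show ?thesis by simp
qed

lemma abs_dirichlet_deriv_3_le: "\<bar>dirichlet_deriv 3 n x\<bar> \<le> 2 * pi * real n * dirichlet_curvature n"
  using abs_dirichlet_deriv_Suc_le[of 2 n x] unfolding sum_two_pi_k_squared by simp

lemma cos_ge_half_near_0: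
  assumes "\<bar>x\<bar> \<le> 1 / (4 * real (2 * n + 1))" and "k \<le> n"
  shows "1 / 2 \<le> cos (2 * pi * real k * x)"
proof -
  have "\<bar>2 * pi * real k * x\<bar> = 2 * pi * real k * \<bar>x\<bar>" by (simp add: abs_mult)
  also have "\<dots> \<le> 2 * pi * real k * (1 / (4 * real (2 * n + 1)))"
    using assms(1) by (intro mult_left_mono) auto
  also have "\<dots> = pi * (real k / (2 * real (2 * n + 1)))" by (simp add: field_simps)
  also have "\<dots> \<le> pi * (1 / 3)"
    using assms(2) by (intro mult_left_mono) (auto simp: field_simps)
  finally have "cos (pi / 3) \<le> cos \<bar>2 * pi * real k * x\<bar>"
    by (intro cos_monotone_0_pi_le) auto
  then show ?thesis by (simp add: cos_60)
qed

lemma dirichlet_deriv_0_nonneg_near_0: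
  assumes "\<bar>x\<bar> \<le> 1 / (4 * real (2 * n + 1))"
  shows "0 \<le> dirichlet_deriv 0 n x"
proof -
  have "0 \<le> cos (2 * pi * real k * x)" if "k \<in> {1..n}" for k
    using cos_ge_half_near_0[OF assms, of k] that by simp
  then have "0 \<le> (\<Sum>k=1..n. cos (2 * pi * real k * x))" by (rule sum_nonneg)
  then show ?thesis unfolding dirichlet_deriv_0_eq by simp
qed

lemma dirichlet_deriv_2_le_near_0:
  assumes "\<bar>x\<bar> \<le> 1 / (4 * real (2 * n + 1))"
  shows "dirichlet_deriv 2 n x \<le> - dirichlet_curvature n / 2"
proof -
  have "(\<Sum>k=1..n. (2 * pi * real k) ^ 2 * (1 / 2))
      \<le> (\<Sum>k=1..n. (2 * pi * real k) ^ 2 * cos (2 * pi * real k * x))"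
    using cos_ge_half_near_0[OF assms] by (intro sum_mono mult_left_mono) auto
  then show ?thesis
    unfolding dirichlet_deriv_2_eq sum_distrib_right[symmetric] sum_two_pi_k_squared
    by (simp add: field_simps)
qed

lemma abs_mod1_eq_round: "abs_mod1 x = \<bar>x - of_int (round x)\<bar>"
  unfolding abs_mod1_def by (rule cInf_eq_minimum) (auto intro: round_diff_minimal)

lemma abs_mod1_le: "abs_mod1 x \<le> \<bar>x - of_int m\<bar>"
  unfolding abs_mod1_eq_round by (rule round_diff_minimal)

lemma abs_mod1_le_half: "abs_mod1 x \<le> 1 / 2"
  unfolding abs_mod1_eq_round using of_int_round_abs_le[of x] by (simp add: abs_minus_commute)

lemma abs_mod1_triangle: "abs_mod1 (x + y) \<le> abs_mod1 x + abs_mod1 y"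
proof -
  have "abs_mod1 (x + y) \<le> \<bar>(x + y) - of_int (round x + round y)\<bar>" by (rule abs_mod1_le)
  also have "\<dots> \<le> \<bar>x - of_int (round x)\<bar> + \<bar>y - of_int (round y)\<bar>" by simp
  finally show ?thesis unfolding abs_mod1_eq_round .
qed

lemma abs_mod1_minus_commute: "abs_mod1 (x - y) = abs_mod1 (y - x)"
proof -
  have "abs_mod1 (- z) \<le> abs_mod1 z" for z
    using abs_mod1_le[of "- z" "- round z"] unfolding abs_mod1_eq_round[of z] by simp
  from this[of "x - y"] this[of "y - x"] show ?thesis by simp
qed

lemma abs_mod1_diff_triangle: "abs_mod1 (x - z) \<le> abs_mod1 (x - y) + abs_mod1 (y - z)"
  using abs_mod1_triangle[of "x - y" "y - z"] by simp

lemma sin_ge_cubic: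
  assumes "0 \<le> (y::real)"
  shows "y - y ^ 3 / 6 \<le> sin y"
proof -
  have "(\<Sum>m<3. sin_coeff m * y ^ m) = y"
    by (simp add: eval_nat_numeral sin_coeff_Suc cos_coeff_Suc)
  moreover have "inverse (fact 3) * \<bar>y\<bar> ^ 3 = y ^ 3 / 6"
    using assms by (simp add: eval_nat_numeral)
  ultimately show ?thesis using Maclaurin_sin_bound[of y 3] by (simp add: abs_le_iff)
qed

lemma sin_le_quintic:
  assumes "0 \<le> (y::real)"
  shows "sin y \<le> y - y ^ 3 / 6 + y ^ 5 / 120"
proof -
  have "(\<Sum>m<5. sin_coeff m * y ^ m) = y - y ^ 3 / 6"
    by (simp add: eval_nat_numeral sin_coeff_Suc cos_coeff_Suc)
  moreover have "inverse (fact 5) * \<bar>y\<bar> ^ 5 = y ^ 5 / 120"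
    using assms by (simp add: eval_nat_numeral)
  ultimately show ?thesis using Maclaurin_sin_bound[of y 5] by (simp add: abs_le_iff)
qed

lemma sin_pi_mult_ge:
  assumes "0 \<le> d" "d \<le> 1 / 2"
  shows "9 / 5 * d \<le> sin (pi * d)"
proof -
  have "(pi * d) ^ 2 \<le> (pi / 2) ^ 2"
    using assms by (intro power_mono) auto
  also have "\<dots> \<le> 5 / 2"
    using mult_mono[of pi "3.15" pi "3.15"] pi_approx pi_gt_zero by (simp add: power2_eq_square)
  finally have "pi * d * (pi * d) ^ 2 \<le> pi * d * (5 / 2)"
    using assms by (intro mult_left_mono) auto
  then have "(pi * d) ^ 3 / 6 \<le> pi * d * (5 / 12)"
    by (simp add: power3_eq_cube power2_eq_square mult_ac)
  moreover have "9 / 5 * d \<le> pi * (7 / 12) * d"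
    using assms pi_approx by (intro mult_right_mono) auto
  ultimately show ?thesis using sin_ge_cubic[of "pi * d"] assms by (simp add: mult_ac)
qed

lemma abs_sin_add_int_pi: "\<bar>sin (x + of_int r * pi)\<bar> = \<bar>sin x\<bar>"
proof -
  have "sin (of_int r * pi) = 0" using sin_zero_iff_int2 by blast
  then have "cos (of_int r * pi) ^ 2 = 1" using sin_cos_squared_add[of "of_int r * pi"] by simp
  then have "cos (of_int r * pi) = 1 \<or> cos (of_int r * pi) = - 1" by (simp add: power2_eq_1_iff)
  then have "\<bar>cos (of_int r * pi)\<bar> = 1" by auto
  with \<open>sin (of_int r * pi) = 0\<close> show ?thesis by (simp add: sin_add abs_mult)
qed

lemma abs_sin_pi_ge_abs_mod1: "9 / 5 * abs_mod1 x \<le> \<bar>sin (pi * x)\<bar>"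
proof -
  define s where "s = x - of_int (round x)"
  have "\<bar>sin (pi * x)\<bar> = \<bar>sin (pi * s + of_int (round x) * pi)\<bar>"
    unfolding s_def by (simp add: algebra_simps)
  also have "\<dots> = \<bar>sin (pi * s)\<bar>" by (rule abs_sin_add_int_pi)
  also have "\<dots> = \<bar>sin (pi * \<bar>s\<bar>)\<bar>"
    by (cases "0 \<le> s") auto
  finally show ?thesis
    using sin_pi_mult_ge[of "\<bar>s\<bar>"] abs_mod1_le_half[of x]
    unfolding abs_mod1_eq_round s_def[symmetric] by simp
qed

lemma sin_le_linear:
  assumes "pi / 4 \<le> u" "u \<le> pi"
  shows "sin u \<le> 91 / 100 * u"
proof -
  define q where "q = u ^ 2"
  have u: "0 < u" using assms pi_gt_zero by linarith
  have "(pi / 4) ^ 2 \<le> q" unfolding q_def using assms pi_gt_zero by (intro power_mono) auto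
  moreover have "(3.14 / 4) ^ 2 \<le> (pi / 4) ^ 2" using pi_approx by (intro power_mono) auto
  ultimately have q1: "3 / 5 \<le> q" by (simp add: power2_eq_square)
  have "q \<le> pi ^ 2" unfolding q_def using assms u by (intro power_mono) auto
  moreover have "pi ^ 2 \<le> 3.15 ^ 2" using pi_approx by (intro power_mono) auto
  ultimately have q2: "q \<le> 993 / 100" by (simp add: power2_eq_square)
  have "(q - 14 / 25) * (q - 97 / 5) \<le> 0" using q1 q2 by (intro mult_nonneg_nonpos) auto
  then have "q * q \<le> 499 / 25 * q - 1358 / 125" by (simp add: algebra_simps)
  then have "1 - q / 6 + q * q / 120 \<le> 91 / 100" using q1 by linarith
  then have "u * (1 - q / 6 + q * q / 120) \<le> u * (91 / 100)" using u by (intro mult_left_mono) auto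
  moreover have "u - u ^ 3 / 6 + u ^ 5 / 120 = u * (1 - q / 6 + q * q / 120)"
    unfolding q_def by (simp add: algebra_simps power2_eq_square power3_eq_cube eval_nat_numeral)
  ultimately show ?thesis using sin_le_quintic[of u] u by linarith
qed

lemma mult_sin_divide_ge:
  assumes "11 \<le> N" "0 \<le> u" "u \<le> pi"
  shows "493 / 500 * u \<le> N * sin (u / N)"
proof -
  have N: "0 < N" using assms(1) by simp
  have "u ^ 2 / (6 * N ^ 2) \<le> pi ^ 2 / (6 * 11 ^ 2)"
    using assms by (intro frac_le power_mono mult_left_mono) auto
  also have "\<dots> \<le> 3.15 ^ 2 / (6 * 11 ^ 2)"
    using pi_approx by (intro divide_right_mono power_mono) auto
  finally have "u * (u ^ 2 / (6 * N ^ 2)) \<le> u * (7 / 500)"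
    using assms(2) by (intro mult_left_mono) (auto simp: power2_eq_square)
  moreover have "N * (u / N - (u / N) ^ 3 / 6) = u - u * (u ^ 2 / (6 * N ^ 2))"
    using N by (simp add: field_simps power2_eq_square power3_eq_cube)
  moreover have "N * (u / N - (u / N) ^ 3 / 6) \<le> N * sin (u / N)"
    using sin_ge_cubic[of "u / N"] assms(2) N by (intro mult_left_mono) auto
  ultimately show ?thesis by linarith
qed

lemma sin_half_mult_sum_cos:
  "2 * sin (t / 2) * (\<Sum>k=1..j. cos (real k * t + c)) = sin ((real j + 1 / 2) * t + c) - sin (t / 2 + c)"
proof (induction j)
  case (Suc j)
  have "(real (Suc j) * t + c) + t / 2 = (real (Suc j) + 1 / 2) * t + c"
    and "(real (Suc j) * t + c) - t / 2 = (real j + 1 / 2) * t + c"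
    by (simp_all add: algebra_simps)
  then have step: "2 * sin (t / 2) * cos (real (Suc j) * t + c)
      = sin ((real (Suc j) + 1 / 2) * t + c) - sin ((real j + 1 / 2) * t + c)"
    using sin_add[of "real (Suc j) * t + c" "t / 2"] sin_diff[of "real (Suc j) * t + c" "t / 2"]
    by (simp add: algebra_simps)
  have "2 * sin (t / 2) * (\<Sum>k=1..Suc j. cos (real k * t + c))
      = 2 * sin (t / 2) * (\<Sum>k=1..j. cos (real k * t + c)) + 2 * sin (t / 2) * cos (real (Suc j) * t + c)"
    by (simp add: distrib_left)
  with Suc.IH step show ?case by linarith
qed simp

lemma abs_sum_cos_le:
  assumes "sin (t / 2) \<noteq> 0"
  shows "\<bar>\<Sum>k=1..j. cos (real k * t + c)\<bar> \<le> 1 / \<bar>sin (t / 2)\<bar>"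
proof -
  have "\<bar>2 * sin (t / 2)\<bar> * \<bar>\<Sum>k=1..j. cos (real k * t + c)\<bar> \<le> 2"
    using sin_half_mult_sum_cos[where t = t and j = j and c = c]
      abs_sin_le_one[of "(real j + 1 / 2) * t + c"] abs_sin_le_one[of "t / 2 + c"]
    by (simp only: abs_mult[symmetric])
  then show ?thesis using assms by (simp add: field_simps abs_mult)
qed

lemma abs_sum_mult_le_summation_by_parts:
  fixes a b :: "nat \<Rightarrow> real"
  assumes mono: "\<And>k. a k \<le> a (Suc k)" and a0: "0 \<le> a 0"
    and partial: "\<And>j. j \<le> n \<Longrightarrow> \<bar>\<Sum>k=1..j. b k\<bar> \<le> B"
  shows "\<bar>\<Sum>k=1..n. a k * b k\<bar> \<le> 2 * a n * B"
proof -
  have parts: "\<bar>(\<Sum>k=1..j. a k * b k) - a j * (\<Sum>k=1..j. b k)\<bar> \<le> B * (a j - a 0)" if "j \<le> n" for j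
    using that
  proof (induction j)
    case (Suc j)
    have "\<bar>(a (Suc j) - a j) * (\<Sum>k=1..j. b k)\<bar> \<le> (a (Suc j) - a j) * B"
      using mono[of j] partial[of j] Suc.prems by (simp add: abs_mult mult_left_mono)
    moreover have "(\<Sum>k=1..Suc j. a k * b k) - a (Suc j) * (\<Sum>k=1..Suc j. b k)
       = ((\<Sum>k=1..j. a k * b k) - a j * (\<Sum>k=1..j. b k)) - (a (Suc j) - a j) * (\<Sum>k=1..j. b k)"
      by (simp add: algebra_simps)
    ultimately show ?case using Suc by (simp add: algebra_simps)
  qed simp
  have an: "0 \<le> a n" using a0 mono by (induction n) (auto intro: order_trans)
  have B: "0 \<le> B" using partial[of 0] by simp
  have "\<bar>a n * (\<Sum>k=1..n. b k)\<bar> \<le> a n * B"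
    using partial[of n] an by (simp add: abs_mult mult_left_mono)
  moreover have "0 \<le> B * a 0" using a0 B by simp
  ultimately show ?thesis
    using parts[of n] abs_triangle_ineq[of "(\<Sum>k=1..n. a k * b k) - a n * (\<Sum>k=1..n. b k)" "a n * (\<Sum>k=1..n. b k)"]
    by (simp add: algebra_simps)
qed

lemma abs_dirichlet_deriv_le_sin:
  assumes "sin (pi * x) \<noteq> 0"
  shows "\<bar>dirichlet_deriv p n x\<bar> \<le> 5 * (2 * pi * real n) ^ p / (real (2 * n + 1) * \<bar>sin (pi * x)\<bar>)"
proof -
  let ?s = "\<bar>sin (pi * x)\<bar>" and ?A = "(2 * pi * real n) ^ p"
  let ?S = "\<Sum>k=1..n. (2 * pi * real k) ^ p * cos (real k * (2 * pi * x) + real p * pi / 2)"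
  have s: "0 < ?s" "?s \<le> 1" using assms by auto
  have "\<bar>?S\<bar> \<le> 2 * ?A * (1 / ?s)"
  proof (rule abs_sum_mult_le_summation_by_parts)
    show "(2 * pi * real k) ^ p \<le> (2 * pi * real (Suc k)) ^ p" for k
      by (intro power_mono) auto
    show "\<bar>\<Sum>k=1..j. cos (real k * (2 * pi * x) + real p * pi / 2)\<bar> \<le> 1 / ?s" for j
      using abs_sum_cos_le[where t = "2 * pi * x" and j = j and c = "real p * pi / 2"] assms by simp
  qed simp
  moreover have "0 ^ p \<le> ?A / ?s"
    using s by (cases p) (auto simp: le_divide_eq)
  moreover have "0 \<le> (0::real) ^ p" by simp
  moreover have "?A / ?s + 2 * (2 * ?A * (1 / ?s)) = 5 * ?A / ?s" by simp
  ultimately have bound: "\<bar>0 ^ p + 2 * ?S\<bar> \<le> 5 * ?A / ?s"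
    unfolding abs_le_iff by linarith
  have "\<bar>dirichlet_deriv p n x\<bar> = \<bar>0 ^ p + 2 * ?S\<bar> / real (2 * n + 1)"
    unfolding dirichlet_deriv_def by (simp add: mult_ac)
  also have "\<dots> \<le> 5 * ?A / ?s / real (2 * n + 1)"
    using bound by (rule divide_right_mono) simp
  finally show ?thesis by (simp add: mult.commute)
qed

lemma abs_dirichlet_deriv_le_abs_mod1:
  assumes "0 < abs_mod1 x"
  shows "\<bar>dirichlet_deriv p n x\<bar> \<le> 25 / 9 * (2 * pi * real n) ^ p / (real (2 * n + 1) * abs_mod1 x)"
proof -
  have s: "9 / 5 * abs_mod1 x \<le> \<bar>sin (pi * x)\<bar>" by (rule abs_sin_pi_ge_abs_mod1)
  then have "\<bar>dirichlet_deriv p n x\<bar> \<le> 5 * (2 * pi * real n) ^ p / (real (2 * n + 1) * \<bar>sin (pi * x)\<bar>)"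
    using assms by (intro abs_dirichlet_deriv_le_sin) auto
  also have "\<dots> \<le> 5 * (2 * pi * real n) ^ p / (real (2 * n + 1) * (9 / 5 * abs_mod1 x))"
    using s assms by (intro divide_left_mono mult_left_mono) auto
  finally show ?thesis by simp
qed

lemma dirichlet_deriv_0_mult_sin:
  "dirichlet_deriv 0 n d * (real (2 * n + 1) * sin (pi * d)) = sin (real (2 * n + 1) * pi * d)"
proof -
  let ?S = "\<Sum>k=1..n. cos (2 * pi * real k * d)"
  have "(\<Sum>k=1..n. cos (real k * (2 * pi * d))) = ?S"
    and "(real n + 1 / 2) * (2 * pi * d) = real (2 * n + 1) * pi * d"
    and "2 * pi * d / 2 = pi * d"
    by (simp_all add: mult_ac algebra_simps)
  note sum_eq = sin_half_mult_sum_cos[where t = "2 * pi * d" and j = n and c = 0, unfolded add_0_right this]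
  have "dirichlet_deriv 0 n d * (real (2 * n + 1) * sin (pi * d)) = (1 + 2 * ?S) * sin (pi * d)"
    unfolding dirichlet_deriv_0_eq by (simp add: field_simps)
  also have "\<dots> = sin (pi * d) + 2 * sin (pi * d) * ?S" by (simp add: algebra_simps)
  finally show ?thesis unfolding sum_eq by simp
qed

lemma dirichlet_deriv_0_abs: "dirichlet_deriv 0 n \<bar>x\<bar> = dirichlet_deriv 0 n x"
  by (cases "0 \<le> x") (simp_all add: dirichlet_deriv_0_minus)

lemma dirichlet_deriv_0_abs_mod1: "dirichlet_deriv 0 n (abs_mod1 x) = dirichlet_deriv 0 n x"
proof -
  have "dirichlet_deriv 0 n x = dirichlet_deriv 0 n (x - of_int (round x))"
    using dirichlet_deriv_add_of_int[of 0 n "x - of_int (round x)" "round x"] by simp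
  also have "\<dots> = dirichlet_deriv 0 n \<bar>x - of_int (round x)\<bar>"
    by (rule dirichlet_deriv_0_abs[symmetric])
  finally show ?thesis unfolding abs_mod1_eq_round ..
qed

lemma abs_dirichlet_deriv_0_mult_sin:
  assumes "0 < sin (pi * d)"
  shows "\<bar>dirichlet_deriv 0 n d\<bar> * (real (2 * n + 1) * sin (pi * d)) = \<bar>sin (real (2 * n + 1) * pi * d)\<bar>"
  using arg_cong[OF dirichlet_deriv_0_mult_sin[of n d], of abs] assms by (simp add: abs_mult)

lemma abs_dirichlet_deriv_0_le_beyond_first_zero:
  assumes "0 < d" "d \<le> 1 / 2" and "1 \<le> real (2 * n + 1) * d"
  shows "\<bar>dirichlet_deriv 0 n d\<bar> \<le> 5 / 9"
proof -
  have sd: "9 / 5 * d \<le> sin (pi * d)" using sin_pi_mult_ge assms by simp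
  have "9 / 5 \<le> 9 / 5 * (real (2 * n + 1) * d)" using assms(3) by simp
  also have "\<dots> = real (2 * n + 1) * (9 / 5 * d)" by (simp add: mult_ac)
  also have "\<dots> \<le> real (2 * n + 1) * sin (pi * d)"
    using sd by (intro mult_left_mono) auto
  finally have "9 / 5 \<le> real (2 * n + 1) * sin (pi * d)" .
  then have "\<bar>dirichlet_deriv 0 n d\<bar> * (9 / 5) \<le> \<bar>dirichlet_deriv 0 n d\<bar> * (real (2 * n + 1) * sin (pi * d))"
    by (intro mult_left_mono) auto
  also have "\<dots> \<le> 1"
    using abs_dirichlet_deriv_0_mult_sin[of d n] sd assms(1) by simp
  finally show ?thesis by simp
qed

lemma abs_dirichlet_deriv_0_le_before_first_zero:
  assumes "5 \<le> n" and "1 / (4 * real (2 * n + 1)) \<le> d" and "real (2 * n + 1) * d < 1"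
  shows "\<bar>dirichlet_deriv 0 n d\<bar> \<le> 49 / 50"
proof -
  define N where "N = real (2 * n + 1)"
  define u where "u = N * pi * d"
  have N: "11 \<le> N" unfolding N_def using assms(1) by simp
  have Nd: "1 / 4 \<le> N * d" "N * d \<le> 1"
    using assms(2,3) N unfolding N_def by (simp_all add: field_simps)
  have u: "pi / 4 \<le> u" "u \<le> pi"
    using mult_left_mono[OF Nd(1), of pi] mult_left_mono[OF Nd(2), of pi] unfolding u_def by (simp_all add: mult_ac)
  have "0 < 1 / (4 * N)" using N by simp
  then have "0 < d" using assms(2) unfolding N_def by linarith
  have "11 * d \<le> N * d" using N \<open>0 < d\<close> by (intro mult_right_mono) auto
  then have "d \<le> 1 / 2" using assms(3) unfolding N_def by linarith
  then have "0 < sin (pi * d)" using sin_pi_mult_ge[of d] \<open>0 < d\<close> by simp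
  have "493 / 500 * u \<le> N * sin (pi * d)"
    using mult_sin_divide_ge[OF N, of u] u pi_gt_zero N unfolding u_def by simp
  then have "\<bar>dirichlet_deriv 0 n d\<bar> * (493 / 500 * u) \<le> \<bar>dirichlet_deriv 0 n d\<bar> * (N * sin (pi * d))"
    by (intro mult_left_mono) auto
  also have "\<dots> = \<bar>sin u\<bar>"
    using abs_dirichlet_deriv_0_mult_sin[OF \<open>0 < sin (pi * d)\<close>] unfolding u_def N_def .
  also have "\<bar>sin u\<bar> \<le> 91 / 100 * u"
    using sin_le_linear[OF u] sin_ge_zero[of u] u pi_gt_zero by simp
  finally have "(\<bar>dirichlet_deriv 0 n d\<bar> * (493 / 500)) * u \<le> 91 / 100 * u"
    by (simp add: mult_ac)
  moreover have "0 < u" using u pi_gt_zero by linarith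
  ultimately have "\<bar>dirichlet_deriv 0 n d\<bar> * (493 / 500) \<le> 91 / 100"
    by simp
  then show ?thesis by simp
qed

lemma abs_dirichlet_deriv_0_le_away_from_0:
  assumes "5 \<le> n" and "1 / (4 * real (2 * n + 1)) \<le> abs_mod1 x"
  shows "\<bar>dirichlet_deriv 0 n x\<bar> \<le> 49 / 50"
proof -
  have "0 < 1 / (4 * real (2 * n + 1))" by simp
  then have "0 < abs_mod1 x" using assms(2) by linarith
  consider "1 \<le> real (2 * n + 1) * abs_mod1 x" | "real (2 * n + 1) * abs_mod1 x < 1" by linarith
  then have "\<bar>dirichlet_deriv 0 n (abs_mod1 x)\<bar> \<le> 49 / 50"
  proof cases
    case 1
    then show ?thesis
      using abs_dirichlet_deriv_0_le_beyond_first_zero[where n = n, OF \<open>0 < abs_mod1 x\<close> abs_mod1_le_half]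
      by simp
  qed (rule abs_dirichlet_deriv_0_le_before_first_zero[OF assms])
  then show ?thesis unfolding dirichlet_deriv_0_abs_mod1 .
qed

lemma floor_bin_bounds:
  assumes "0 < \<Delta>" and "\<Delta> / 2 \<le> x"
  shows "real (nat \<lfloor>2 * x / \<Delta>\<rfloor>) * \<Delta> / 2 \<le> x" and "x < (real (nat \<lfloor>2 * x / \<Delta>\<rfloor>) + 1) * \<Delta> / 2"
    and "1 \<le> nat \<lfloor>2 * x / \<Delta>\<rfloor>"
proof -
  have "1 \<le> 2 * x / \<Delta>" using assms by (simp add: field_simps)
  moreover have "real (nat \<lfloor>2 * x / \<Delta>\<rfloor>) = of_int \<lfloor>2 * x / \<Delta>\<rfloor>" using assms by simp
  moreover have "(1::int) \<le> \<lfloor>2 * x / \<Delta>\<rfloor>" using calculation(1) by (simp add: le_floor_iff)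
  ultimately have "real (nat \<lfloor>2 * x / \<Delta>\<rfloor>) \<le> 2 * x / \<Delta>" "2 * x / \<Delta> < real (nat \<lfloor>2 * x / \<Delta>\<rfloor>) + 1"
    "1 \<le> real (nat \<lfloor>2 * x / \<Delta>\<rfloor>)"
    by linarith+
  then show "real (nat \<lfloor>2 * x / \<Delta>\<rfloor>) * \<Delta> / 2 \<le> x" "x < (real (nat \<lfloor>2 * x / \<Delta>\<rfloor>) + 1) * \<Delta> / 2"
    "1 \<le> nat \<lfloor>2 * x / \<Delta>\<rfloor>"
    using assms(1) by (simp_all add: field_simps)
qed

lemma separated_bins_inj_on:
  fixes s :: "'a \<Rightarrow> real"
  assumes \<Delta>: "0 < \<Delta>" and far: "\<And>k. k \<in> K \<Longrightarrow> \<Delta> / 2 \<le> \<bar>s k\<bar>"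
    and sep: "\<And>k l. k \<in> K \<Longrightarrow> l \<in> K \<Longrightarrow> k \<noteq> l \<Longrightarrow> \<Delta> \<le> \<bar>s k - s l\<bar>"
  shows "inj_on (\<lambda>k. (nat \<lfloor>2 * \<bar>s k\<bar> / \<Delta>\<rfloor>, 0 \<le> s k)) K"
proof (rule inj_onI, rule ccontr)
  fix k l assume k: "k \<in> K" and l: "l \<in> K" and "k \<noteq> l"
    and "(nat \<lfloor>2 * \<bar>s k\<bar> / \<Delta>\<rfloor>, 0 \<le> s k) = (nat \<lfloor>2 * \<bar>s l\<bar> / \<Delta>\<rfloor>, 0 \<le> s l)"
  then have "nat \<lfloor>2 * \<bar>s k\<bar> / \<Delta>\<rfloor> = nat \<lfloor>2 * \<bar>s l\<bar> / \<Delta>\<rfloor>" "0 \<le> s k \<longleftrightarrow> 0 \<le> s l" by auto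
  then have "\<bar>s k - s l\<bar> < \<Delta> / 2"
    using floor_bin_bounds[OF \<Delta> far[OF k]] floor_bin_bounds[OF \<Delta> far[OF l]]
    by (auto simp: field_simps abs_if split: if_splits)
  with sep[OF k l \<open>k \<noteq> l\<close>] \<Delta> show False by linarith
qed

lemma sum_inverse_separated_le:
  fixes s :: "'a \<Rightarrow> real"
  assumes K: "finite K" "card K \<le> m" and m: "1 \<le> m" and \<Delta>: "0 < \<Delta>"
    and far: "\<And>k. k \<in> K \<Longrightarrow> \<Delta> / 2 \<le> \<bar>s k\<bar>"
    and sep: "\<And>k l. k \<in> K \<Longrightarrow> l \<in> K \<Longrightarrow> k \<noteq> l \<Longrightarrow> \<Delta> \<le> \<bar>s k - s l\<bar>"
  shows "(\<Sum>k\<in>K. 1 / \<bar>s k\<bar>) \<le> 6 * (1 + ln (real m)) / \<Delta>"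
proof -
  define i where "i k = nat \<lfloor>2 * \<bar>s k\<bar> / \<Delta>\<rfloor>" for k
  define bin where "bin k = (i k, 0 \<le> s k)" for k
  note bounds = floor_bin_bounds[OF \<Delta> far, folded i_def]
  have s_pos: "0 < \<bar>s k\<bar>" if "k \<in> K" for k
    using far[OF that] \<Delta> by linarith
  define K1 where "K1 = {k\<in>K. i k \<le> m}"
  have "(\<Sum>k\<in>K - K1. 1 / \<bar>s k\<bar>) \<le> (\<Sum>k\<in>K - K1. 2 / (real m * \<Delta>))"
  proof (rule sum_mono)
    fix k assume k: "k \<in> K - K1"
    then have "real m * \<Delta> / 2 \<le> \<bar>s k\<bar>"
      using bounds(1)[of k] \<Delta> unfolding K1_def by (auto intro: order_trans[rotated] simp: field_simps)
    then show "1 / \<bar>s k\<bar> \<le> 2 / (real m * \<Delta>)"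
      using m \<Delta> s_pos[of k] k by (simp add: field_simps)
  qed
  also have "\<dots> = real (card (K - K1)) * (2 / (real m * \<Delta>))" by simp
  also have "\<dots> \<le> real m * (2 / (real m * \<Delta>))"
    using card_mono[OF K(1), of "K - K1"] K(2) \<Delta> by (intro mult_right_mono) auto
  finally have outer: "(\<Sum>k\<in>K - K1. 1 / \<bar>s k\<bar>) \<le> 2 / \<Delta>" using m by simp
  have "inj_on bin K1"
    unfolding bin_def i_def K1_def by (rule inj_on_subset[OF separated_bins_inj_on[OF \<Delta> far sep]]) auto
  have "(\<Sum>k\<in>K1. 1 / \<bar>s k\<bar>) \<le> (\<Sum>k\<in>K1. 2 / \<Delta> * (1 / real (fst (bin k))))"
  proof (rule sum_mono)
    fix k assume "k \<in> K1"
    then have "k \<in> K" unfolding K1_def by simp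
    then show "1 / \<bar>s k\<bar> \<le> 2 / \<Delta> * (1 / real (fst (bin k)))"
      using bounds(1,3)[of k] \<Delta> s_pos[of k] unfolding bin_def by (simp add: field_simps)
  qed
  also have "\<dots> = (\<Sum>q\<in>bin ` K1. 2 / \<Delta> * (1 / real (fst q)))"
    by (simp add: sum.reindex[OF \<open>inj_on bin K1\<close>])
  also have "\<dots> \<le> (\<Sum>q\<in>{1..m} \<times> (UNIV :: bool set). 2 / \<Delta> * (1 / real (fst q)))"
    using bounds(3) \<Delta> unfolding K1_def by (intro sum_mono2) (auto simp: bin_def)
  also have "\<dots> = (\<Sum>a\<in>{1..m}. \<Sum>b\<in>(UNIV :: bool set). 2 / \<Delta> * (1 / real a))"
    by (subst sum.cartesian_product) (simp add: split_def)
  also have "\<dots> = 2 * (2 / \<Delta>) * harm m"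
    by (simp add: UNIV_bool sum_distrib_left harm_def inverse_eq_divide)
  also have "\<dots> \<le> 2 * (2 / \<Delta>) * (1 + ln (real m))"
    using euler_mascheroni_sequence_decreasing[of 1 m] m \<Delta> by (intro mult_left_mono) (auto simp: harm_def)
  finally have inner: "(\<Sum>k\<in>K1. 1 / \<bar>s k\<bar>) \<le> 4 * (1 + ln (real m)) / \<Delta>" by simp
  have "(\<Sum>k\<in>K. 1 / \<bar>s k\<bar>) = (\<Sum>k\<in>K - K1. 1 / \<bar>s k\<bar>) + (\<Sum>k\<in>K1. 1 / \<bar>s k\<bar>)"
    using K(1) unfolding K1_def by (intro sum.subset_diff) auto
  also have "\<dots> \<le> 2 / \<Delta> + 4 * (1 + ln (real m)) / \<Delta>" using outer inner by linarith
  also have "\<dots> \<le> 6 * (1 + ln (real m)) / \<Delta>"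
    using m \<Delta> by (simp add: field_simps)
  finally show ?thesis .
qed

lemma sum_inverse_abs_mod1_separated_le:
  assumes "finite K" "card K \<le> m" "1 \<le> m" "0 < \<Delta>"
    and "\<And>k. k \<in> K \<Longrightarrow> \<Delta> / 2 \<le> abs_mod1 (\<theta> - \<tau> k)"
    and sep: "\<And>k l. k \<in> K \<Longrightarrow> l \<in> K \<Longrightarrow> k \<noteq> l \<Longrightarrow> \<Delta> \<le> abs_mod1 (\<tau> k - \<tau> l)"
  shows "(\<Sum>k\<in>K. 1 / abs_mod1 (\<theta> - \<tau> k)) \<le> 6 * (1 + ln (real m)) / \<Delta>"
proof -
  define s where "s k = (\<theta> - \<tau> k) - of_int (round (\<theta> - \<tau> k))" for k
  have "abs_mod1 (\<theta> - \<tau> k) = \<bar>s k\<bar>" for k unfolding s_def abs_mod1_eq_round ..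
  moreover have "\<Delta> \<le> \<bar>s k - s l\<bar>" if "k \<in> K" "l \<in> K" "k \<noteq> l" for k l
  proof -
    have "\<Delta> \<le> abs_mod1 (\<tau> l - \<tau> k)" using sep[OF that(2,1)] that(3) by simp
    also have "\<dots> \<le> \<bar>(\<tau> l - \<tau> k) - of_int (round (\<theta> - \<tau> k) - round (\<theta> - \<tau> l))\<bar>"
      by (rule abs_mod1_le)
    also have "\<dots> = \<bar>s k - s l\<bar>" unfolding s_def by (simp add: algebra_simps)
    finally show ?thesis .
  qed
  ultimately show ?thesis using sum_inverse_separated_le[of K m \<Delta> s] assms by simp
qed

definition unit_diag_dominant :: "real \<Rightarrow> 'a :: real_normed_field mat \<Rightarrow> bool" where
  "unit_diag_dominant \<sigma> A \<longleftrightarrow>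
     (\<forall>i<dim_row A. A $$ (i, i) = 1 \<and> (\<Sum>k\<in>{..<dim_col A} - {i}. norm (A $$ (i, k))) \<le> \<sigma>)"

lemma mult_mat_vec_index_sum:
  fixes A :: "'a :: semiring_0 mat"
  shows "A \<in> carrier_mat N N \<Longrightarrow> v \<in> carrier_vec N \<Longrightarrow> i < N \<Longrightarrow> (A *\<^sub>v v) $ i = (\<Sum>k<N. A $$ (i, k) * v $ k)"
  by (auto simp: scalar_prod_def lessThan_atLeast0 intro!: sum.cong)

lemma unit_diag_dominant_mult_vec_close:
  fixes A :: "'a :: real_normed_field mat" and v :: "'a vec"
  assumes A: "A \<in> carrier_mat N N" "unit_diag_dominant \<sigma> A" and v: "v \<in> carrier_vec N"
    and T: "\<And>k. k < N \<Longrightarrow> norm (v $ k) \<le> T" and i: "i < N"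
  shows "norm ((A *\<^sub>v v) $ i - v $ i) \<le> \<sigma> * T"
proof -
  let ?K = "{..<N} - {i}"
  have diag: "A $$ (i, i) = 1" and off: "(\<Sum>k\<in>?K. norm (A $$ (i, k))) \<le> \<sigma>"
    using A i unfolding unit_diag_dominant_def by auto
  have "(A *\<^sub>v v) $ i = v $ i + (\<Sum>k\<in>?K. A $$ (i, k) * v $ k)"
    using mult_mat_vec_index_sum[OF A(1) v i] sum.remove[of "{..<N}" i "\<lambda>k. A $$ (i, k) * v $ k"] i diag
    by simp
  then have "norm ((A *\<^sub>v v) $ i - v $ i) \<le> (\<Sum>k\<in>?K. norm (A $$ (i, k) * v $ k))"
    by (simp add: norm_sum)
  also have "\<dots> \<le> (\<Sum>k\<in>?K. norm (A $$ (i, k)) * T)"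
    using T by (intro sum_mono) (simp add: norm_mult mult_left_mono)
  also have "\<dots> = (\<Sum>k\<in>?K. norm (A $$ (i, k))) * T" by (rule sum_distrib_right[symmetric])
  also have "\<dots> \<le> \<sigma> * T"
    using off T[OF i] norm_ge_zero[of "v $ i"] by (intro mult_right_mono) linarith+
  finally show ?thesis .
qed

lemma unit_diag_dominant_nonneg:
  fixes A :: "'a :: real_normed_field mat"
  assumes "unit_diag_dominant \<sigma> A" "0 < dim_row A"
  shows "0 \<le> \<sigma>"
proof -
  have "0 \<le> (\<Sum>k\<in>{..<dim_col A} - {0}. norm (A $$ (0, k)))" by (rule sum_nonneg) simp
  with assms show ?thesis unfolding unit_diag_dominant_def by fastforce
qed

lemma unit_diag_dominant_solution_close:
  fixes A :: "'a :: real_normed_field mat" and v r :: "'a vec"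
  assumes A: "A \<in> carrier_mat N N" "unit_diag_dominant \<sigma> A" "\<sigma> < 1"
    and v: "v \<in> carrier_vec N" and r: "A *\<^sub>v v = r" "\<And>k. k < N \<Longrightarrow> norm (r $ k) \<le> R"
    and i: "i < N"
  shows "norm (v $ i - r $ i) \<le> \<sigma> * R / (1 - \<sigma>)"
proof -
  define T where "T = Max ((\<lambda>k. norm (v $ k)) ` {..<N})"
  have T: "norm (v $ k) \<le> T" if "k < N" for k
    unfolding T_def using that by (intro Max_ge) auto
  obtain j where j: "j < N" "T = norm (v $ j)"
    using Max_in[of "(\<lambda>k. norm (v $ k)) ` {..<N}"] i unfolding T_def by fastforce
  have close: "norm (v $ k - r $ k) \<le> \<sigma> * T" if "k < N" for k
    using unit_diag_dominant_mult_vec_close[OF A(1,2) v T that] r(1) by (simp add: norm_minus_commute)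
  have "T \<le> norm (r $ j) + norm (v $ j - r $ j)"
    using j(2) norm_triangle_ineq[of "r $ j" "v $ j - r $ j"] by simp
  then have "(1 - \<sigma>) * T \<le> R" using close[OF j(1)] r(2)[OF j(1)] by (simp add: algebra_simps)
  then have "T \<le> R / (1 - \<sigma>)" using A(3) by (simp add: field_simps)
  moreover have "0 \<le> \<sigma>" using unit_diag_dominant_nonneg[OF A(2)] A(1) i by simp
  ultimately have "\<sigma> * T \<le> \<sigma> * (R / (1 - \<sigma>))" by (rule mult_left_mono)
  then show ?thesis using close[OF i] by simp
qed

lemma unit_diag_dominant_mult_vec_inj:
  fixes A :: "'a :: real_normed_field mat" and v w :: "'a vec"
  assumes A: "A \<in> carrier_mat N N" "unit_diag_dominant \<sigma> A" "\<sigma> < 1"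
    and v: "v \<in> carrier_vec N" "w \<in> carrier_vec N" and eq: "A *\<^sub>v v = A *\<^sub>v w"
  shows "v = w"
proof (rule eq_vecI)
  have "A *\<^sub>v (v - w) = 0\<^sub>v N" using eq A(1) v by (simp add: mult_minus_distrib_mat_vec)
  then have "norm ((v - w) $ i - 0\<^sub>v N $ i) \<le> \<sigma> * 0 / (1 - \<sigma>)" if "i < N" for i
    using unit_diag_dominant_solution_close[OF A, of "v - w" "0\<^sub>v N" 0 i] v that by simp
  then show "v $ i = w $ i" if "i < dim_vec w" for i using v that by simp
qed (use v in simp)

lemma unit_diag_dominant_invertible:
  fixes A :: "'a :: real_normed_field mat"
  assumes A: "A \<in> carrier_mat N N" "unit_diag_dominant \<sigma> A" "\<sigma> < 1"
  shows "invertible_mat A"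
proof -
  have "det A \<noteq> 0"
  proof
    assume "det A = 0"
    then obtain v where v: "v \<in> carrier_vec N" "v \<noteq> 0\<^sub>v N" "A *\<^sub>v v = 0\<^sub>v N"
      using det_0_iff_vec_prod_zero[OF A(1)] by auto
    have "A *\<^sub>v 0\<^sub>v N = 0\<^sub>v N" using A(1) by (intro eq_vecI) (auto simp: scalar_prod_def)
    then show False
      using unit_diag_dominant_mult_vec_inj[OF A v(1) zero_carrier_vec] v by simp
  qed
  then obtain B where "B \<in> carrier_mat N N" "A * B = 1\<^sub>m N" "B * A = 1\<^sub>m N"
    using det_non_zero_imp_unit[OF A(1), of "()"] unfolding Units_def ring_mat_def by auto
  then show ?thesis using A(1) unfolding invertible_mat_def inverts_mat_def by auto
qed

lemma unit_diag_dominant_solvable: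
  fixes A :: "'a :: real_normed_field mat" and r :: "'a vec"
  assumes A: "A \<in> carrier_mat N N" "unit_diag_dominant \<sigma> A" "\<sigma> < 1" and r: "r \<in> carrier_vec N"
  obtains v where "v \<in> carrier_vec N" "A *\<^sub>v v = r"
proof -
  have "invertible_mat A" by (rule unit_diag_dominant_invertible[OF A])
  then obtain B where "A * B = 1\<^sub>m N" "B * A = 1\<^sub>m (dim_row B)"
    using A(1) unfolding invertible_mat_def inverts_mat_def by auto
  moreover from this have "B \<in> carrier_mat N N"
    using A(1) by (metis carrier_matD carrier_matI index_mult_mat(2,3) index_one_mat(2,3))
  ultimately show ?thesis using that[of "B *\<^sub>v r"] A(1) r by (simp flip: assoc_mult_mat_vec)
qed

lemma unit_diag_dominant_real_solution:
  fixes A :: "complex mat" and v r :: "complex vec"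
  assumes A: "A \<in> carrier_mat N N" "unit_diag_dominant \<sigma> A" "\<sigma> < 1"
    and real_A: "\<And>i k. i < N \<Longrightarrow> k < N \<Longrightarrow> Im (A $$ (i, k)) = 0"
    and v: "v \<in> carrier_vec N" and r: "A *\<^sub>v v = r" "\<And>k. k < N \<Longrightarrow> Im (r $ k) = 0"
    and i: "i < N"
  shows "Im (v $ i) = 0"
proof -
  define w where "w = map_vec cnj v"
  have w: "w \<in> carrier_vec N" using v unfolding w_def by simp
  have "(A *\<^sub>v w) $ k = (A *\<^sub>v v) $ k" if k: "k < N" for k
  proof -
    have "cnj (A $$ (k, l)) = A $$ (k, l)" if "l < N" for l
      using real_A[OF k that] by (simp add: complex_eq_iff)
    then have "(A *\<^sub>v w) $ k = cnj ((A *\<^sub>v v) $ k)"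
      unfolding mult_mat_vec_index_sum[OF A(1) v k] mult_mat_vec_index_sum[OF A(1) w k]
      using v by (simp add: w_def)
    also have "\<dots> = (A *\<^sub>v v) $ k"
      using r k by (simp add: complex_eq_iff)
    finally show ?thesis .
  qed
  then have "A *\<^sub>v w = A *\<^sub>v v" using A(1) v w by (intro eq_vecI) auto
  then have "w = v" using unit_diag_dominant_mult_vec_inj[OF A w v] by simp
  then have "cnj (v $ i) = v $ i" using i v unfolding w_def by (metis carrier_vecD index_map_vec(1))
  then show ?thesis by (simp add: complex_eq_iff)
qed

definition interpolation_matrix :: "nat \<Rightarrow> nat \<Rightarrow> (nat \<Rightarrow> real) \<Rightarrow> complex mat" where
  "interpolation_matrix n m \<tau> =
     four_block_mat (kmat (dirichlet n) m \<tau>)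
       ((complex_of_real (1 / sqrt (cmod (dirichlet2 n 0)))) \<cdot>\<^sub>m kmat (dirichlet1 n) m \<tau>)
       ((- complex_of_real (1 / sqrt (cmod (dirichlet2 n 0)))) \<cdot>\<^sub>m kmat (dirichlet1 n) m \<tau>)
       ((- complex_of_real (1 / cmod (dirichlet2 n 0))) \<cdot>\<^sub>m kmat (dirichlet2 n) m \<tau>)"

lemma interpolation_matrix_carrier: "interpolation_matrix n m \<tau> \<in> carrier_mat (m + m) (m + m)"
  unfolding interpolation_matrix_def kmat_def by (rule four_block_carrier_mat) auto

lemma interpolation_matrix_index:
  assumes "j < m" "k < m"
  shows "interpolation_matrix n m \<tau> $$ (j, k) = of_real (dirichlet_deriv 0 n (\<tau> j - \<tau> k))"
    and "interpolation_matrix n m \<tau> $$ (j, m + k)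
           = of_real (dirichlet_deriv 1 n (\<tau> j - \<tau> k) / sqrt (dirichlet_curvature n))"
    and "interpolation_matrix n m \<tau> $$ (m + j, k)
           = of_real (- dirichlet_deriv 1 n (\<tau> j - \<tau> k) / sqrt (dirichlet_curvature n))"
    and "interpolation_matrix n m \<tau> $$ (m + j, m + k)
           = of_real (- dirichlet_deriv 2 n (\<tau> j - \<tau> k) / dirichlet_curvature n)"
  using assms unfolding interpolation_matrix_def cmod_dirichlet2_0
  by (simp_all add: kmat_def dirichlet_eq dirichlet1_eq dirichlet2_eq)

lemma interpolation_matrix_real:
  assumes "i < m + m" "k < m + m"
  shows "Im (interpolation_matrix n m \<tau> $$ (i, k)) = 0"
proof -
  consider "i < m" "k < m" | "i < m" "m \<le> k" | "m \<le> i" "k < m" | "m \<le> i" "m \<le> k" by linarith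
  then show ?thesis
  proof cases
    case 1
    then show ?thesis by (simp add: interpolation_matrix_index)
  next
    case 2
    then show ?thesis using interpolation_matrix_index(2)[where m = m and j = i and k = "k - m"] assms by simp
  next
    case 3
    then show ?thesis using interpolation_matrix_index(3)[where m = m and j = "i - m" and k = k] assms by simp
  next
    case 4
    then show ?thesis using interpolation_matrix_index(4)[where m = m and j = "i - m" and k = "k - m"] assms by simp
  qed
qed

lemma sum_lessThan_add:
  fixes a b :: nat
  shows "(\<Sum>k<a + b. f k) = (\<Sum>k<a. f k) + (\<Sum>k<b. f (a + k))"
  by (induction b) (simp_all add: add.assoc)

lemma sum_lessThan_add_remove:
  fixes f :: "nat \<Rightarrow> 'b :: ab_group_add" and a b :: nat
  shows "i < a \<Longrightarrow> (\<Sum>k\<in>{..<a + b} - {i}. f k) = (\<Sum>k\<in>{..<a} - {i}. f k) + (\<Sum>k<b. f (a + k))"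
    and "i < b \<Longrightarrow> (\<Sum>k\<in>{..<a + b} - {a + i}. f k) = (\<Sum>k<a. f k) + (\<Sum>k\<in>{..<b} - {i}. f (a + k))"
proof -
  have remove: "(\<Sum>k\<in>{..<c} - {l}. g k) = (\<Sum>k<c. g k) - g l" if "l < c" for g :: "nat \<Rightarrow> 'b" and c l
    using sum.remove[of "{..<c}" l g] that by simp
  show "i < a \<Longrightarrow> (\<Sum>k\<in>{..<a + b} - {i}. f k) = (\<Sum>k\<in>{..<a} - {i}. f k) + (\<Sum>k<b. f (a + k))"
    by (simp add: remove sum_lessThan_add)
  show "i < b \<Longrightarrow> (\<Sum>k\<in>{..<a + b} - {a + i}. f k) = (\<Sum>k<a. f k) + (\<Sum>k\<in>{..<b} - {i}. f (a + k))"
    using remove[of i b "\<lambda>k. f (a + k)"] by (simp add: remove sum_lessThan_add)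
qed

lemma sum_lessThan_eq_remove:
  fixes f :: "nat \<Rightarrow> 'b :: comm_monoid_add"
  shows "j < m \<Longrightarrow> f j = 0 \<Longrightarrow> (\<Sum>k<m. f k) = (\<Sum>k\<in>{..<m} - {j}. f k)"
  using sum.remove[of "{..<m}" j f] by simp

lemma interpolation_matrix_mult_vec:
  fixes n :: nat and x y :: "complex vec"
  assumes x: "x \<in> carrier_vec m" and y: "y \<in> carrier_vec m" and j: "j < m"
  defines "s \<equiv> sqrt (dirichlet_curvature n)"
  shows "(interpolation_matrix n m \<tau> *\<^sub>v (x @\<^sub>v y)) $ j
           = (\<Sum>k<m. of_real (dirichlet_deriv 0 n (\<tau> j - \<tau> k)) * x $ k
                     + of_real (dirichlet_deriv 1 n (\<tau> j - \<tau> k) / s) * y $ k)"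
    and "(interpolation_matrix n m \<tau> *\<^sub>v (x @\<^sub>v y)) $ (m + j)
           = - (\<Sum>k<m. of_real (dirichlet_deriv 1 n (\<tau> j - \<tau> k) / s) * x $ k
                       + of_real (dirichlet_deriv 2 n (\<tau> j - \<tau> k) / s ^ 2) * y $ k)"
proof -
  have xy: "x @\<^sub>v y \<in> carrier_vec (m + m)" using x y by simp
  have "j < m + m" "m + j < m + m" using j by simp_all
  note index = mult_mat_vec_index_sum[OF interpolation_matrix_carrier xy this(1)]
    mult_mat_vec_index_sum[OF interpolation_matrix_carrier xy this(2)]
  show "(interpolation_matrix n m \<tau> *\<^sub>v (x @\<^sub>v y)) $ j = (\<Sum>k<m. of_real (dirichlet_deriv 0 n (\<tau> j - \<tau> k)) * x $ k
                     + of_real (dirichlet_deriv 1 n (\<tau> j - \<tau> k) / s) * y $ k)"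
    using j x y unfolding index(1) sum_lessThan_add s_def
    by (simp add: interpolation_matrix_index sum.distrib)
  have "s ^ 2 = dirichlet_curvature n" unfolding s_def using dirichlet_curvature_nonneg by simp
  then show "(interpolation_matrix n m \<tau> *\<^sub>v (x @\<^sub>v y)) $ (m + j)
           = - (\<Sum>k<m. of_real (dirichlet_deriv 1 n (\<tau> j - \<tau> k) / s) * x $ k
                       + of_real (dirichlet_deriv 2 n (\<tau> j - \<tau> k) / s ^ 2) * y $ k)"
    using j x y unfolding index(2) sum_lessThan_add
    by (simp add: interpolation_matrix_index sum.distrib sum_negf s_def)
qed

locale separated_nodes =
  fixes n m :: nat and \<tau> :: "nat \<Rightarrow> real"
  assumes n_pos: "1 \<le> n" and m_pos: "1 \<le> m"
    and separated: "\<And>j k. j < m \<Longrightarrow> k < m \<Longrightarrow> j \<noteq> k \<Longrightarrow>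
                      10 ^ 6 * (1 / real n) * ln (real m) \<le> abs_mod1 (\<tau> j - \<tau> k)"
begin

definition \<Delta> :: real where "\<Delta> = 10 ^ 6 * (1 / real n) * ln (real m)"

text \<open>\<open>\<epsilon> (2 \<pi> n)\<^sup>p\<close> bounds the tail sums of the \<open>p\<close>-th kernel derivative. With a single node
  there are no tails, and \<open>\<epsilon> = 0\<close> keeps the far-field estimate valid although \<open>n\<close> may then be small.\<close>
definition \<epsilon> :: real where "\<epsilon> = (if m = 1 then 0 else 21 / 10 ^ 6)"

abbreviation \<kappa> :: real where "\<kappa> \<equiv> dirichlet_curvature n"

lemma \<epsilon>_nonneg: "0 \<le> \<epsilon>" and \<epsilon>_le: "\<epsilon> \<le> 1 / 40000"
  unfolding \<epsilon>_def by simp_all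

lemma \<kappa>_pos: "0 < \<kappa>"
  using dirichlet_curvature_pos n_pos by simp

lemma at_least_two_nodes:
  assumes "2 \<le> m"
  shows "2 / 3 \<le> ln (real m)" and "0 < \<Delta>" and "1 / real n \<le> \<Delta>" and "10 ^ 6 \<le> real n"
proof -
  have "ln 2 \<le> ln (real m)" using assms by simp
  then show ln: "2 / 3 \<le> ln (real m)" using ln2_ge_two_thirds by linarith
  have "1 / real n * 1 \<le> 1 / real n * (10 ^ 6 * ln (real m))"
    using ln by (intro mult_left_mono) auto
  then show \<Delta>: "1 / real n \<le> \<Delta>" unfolding \<Delta>_def by (simp add: mult_ac)
  moreover have "0 < 1 / real n" using n_pos by simp
  ultimately show "0 < \<Delta>" by linarith
  have "\<Delta> \<le> abs_mod1 (\<tau> 0 - \<tau> 1)" unfolding \<Delta>_def using separated[of 0 1] assms by simp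
  also have "\<dots> \<le> 1 / 2" by (rule abs_mod1_le_half)
  finally have "\<Delta> * real n \<le> 1 / 2 * real n" by (intro mult_right_mono) auto
  moreover have "\<Delta> * real n = 1000000 * ln (real m)" unfolding \<Delta>_def using n_pos by simp
  ultimately have "1000000 \<le> real n" using ln by linarith
  then show "10 ^ 6 \<le> real n" by simp
qed

lemma sum_inverse_abs_mod1_tail:
  assumes "2 \<le> m" and j: "j < m" and far: "\<And>k. k \<in> {..<m} - {j} \<Longrightarrow> \<Delta> / 2 \<le> abs_mod1 (\<theta> - \<tau> k)"
  shows "(\<Sum>k\<in>{..<m} - {j}. 1 / abs_mod1 (\<theta> - \<tau> k)) \<le> 15 / 10 ^ 6 * real n"
proof -
  note m2 = at_least_two_nodes[OF assms(1)]
  have "(\<Sum>k\<in>{..<m} - {j}. 1 / abs_mod1 (\<theta> - \<tau> k)) \<le> 6 * (1 + ln (real m)) / \<Delta>"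
    using m_pos m2(2) far separated card_mono[of "{..<m}" "{..<m} - {j}"] unfolding \<Delta>_def[symmetric]
    by (intro sum_inverse_abs_mod1_separated_le) auto
  also have "\<dots> = real n * (6 * (1 + ln (real m)) / (10 ^ 6 * ln (real m)))"
    unfolding \<Delta>_def using n_pos m2(1) by (simp add: field_simps)
  also have "\<dots> \<le> real n * (15 / 10 ^ 6)"
    using m2(1) by (intro mult_left_mono) (auto simp: field_simps)
  finally show ?thesis by simp
qed

lemma sum_abs_dirichlet_deriv_tail:
  assumes j: "j < m" and far: "\<And>k. k \<in> {..<m} - {j} \<Longrightarrow> \<Delta> / 2 \<le> abs_mod1 (\<theta> - \<tau> k)"
  shows "(\<Sum>k\<in>{..<m} - {j}. \<bar>dirichlet_deriv p n (\<theta> - \<tau> k)\<bar>) \<le> \<epsilon> * (2 * pi * real n) ^ p"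
proof (cases "m = 1")
  case True
  then have empty: "{..<m} - {j} = {}" using j by auto
  show ?thesis unfolding empty \<epsilon>_def using True by simp
next
  case False
  then have m2: "2 \<le> m" using m_pos by simp
  let ?c = "25 / 9 * (2 * pi * real n) ^ p / real (2 * n + 1)"
  have "(\<Sum>k\<in>{..<m} - {j}. \<bar>dirichlet_deriv p n (\<theta> - \<tau> k)\<bar>)
      \<le> (\<Sum>k\<in>{..<m} - {j}. ?c * (1 / abs_mod1 (\<theta> - \<tau> k)))"
  proof (rule sum_mono)
    fix k assume "k \<in> {..<m} - {j}"
    then have "0 < abs_mod1 (\<theta> - \<tau> k)" using far at_least_two_nodes(2)[OF m2] by fastforce
    then show "\<bar>dirichlet_deriv p n (\<theta> - \<tau> k)\<bar> \<le> ?c * (1 / abs_mod1 (\<theta> - \<tau> k))"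
      using abs_dirichlet_deriv_le_abs_mod1[of "\<theta> - \<tau> k" p n] by (simp add: algebra_simps)
  qed
  also have "\<dots> = ?c * (\<Sum>k\<in>{..<m} - {j}. 1 / abs_mod1 (\<theta> - \<tau> k))"
    by (rule sum_distrib_left[symmetric])
  also have "\<dots> \<le> ?c * (15 / 10 ^ 6 * real n)"
    using sum_inverse_abs_mod1_tail[OF m2 j far] by (intro mult_left_mono) auto
  also have "\<dots> = (2 * pi * real n) ^ p * (375 / 10 ^ 6 / 9 * (real n / real (2 * n + 1)))"
    by (simp add: field_simps)
  also have "\<dots> \<le> (2 * pi * real n) ^ p * (21 / 10 ^ 6)"
    by (intro mult_left_mono) (auto simp: field_simps)
  finally show ?thesis unfolding \<epsilon>_def using False by (simp add: mult.commute)
qed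

lemma sum_abs_dirichlet_deriv_tail_at_node:
  assumes "j < m"
  shows "(\<Sum>k\<in>{..<m} - {j}. \<bar>dirichlet_deriv p n (\<tau> j - \<tau> k)\<bar>) \<le> \<epsilon> * (2 * pi * real n) ^ p"
proof (rule sum_abs_dirichlet_deriv_tail[OF assms])
  fix k assume "k \<in> {..<m} - {j}"
  then have "\<Delta> \<le> abs_mod1 (\<tau> j - \<tau> k)" unfolding \<Delta>_def using separated assms by auto
  moreover have "0 \<le> \<Delta>" unfolding \<Delta>_def using m_pos by simp
  ultimately show "\<Delta> / 2 \<le> abs_mod1 (\<tau> j - \<tau> k)" by simp
qed

lemma sum_abs_dirichlet_deriv_1_row_le:
  assumes j: "j < m"
  shows "(\<Sum>k<m. \<bar>dirichlet_deriv 1 n (\<tau> j - \<tau> k) / sqrt \<kappa>\<bar>) \<le> 2 * \<epsilon>"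
proof -
  have "(\<Sum>k<m. \<bar>dirichlet_deriv 1 n (\<tau> j - \<tau> k)\<bar>) = (\<Sum>k\<in>{..<m} - {j}. \<bar>dirichlet_deriv 1 n (\<tau> j - \<tau> k)\<bar>)"
    by (rule sum_lessThan_eq_remove[OF j]) (use dirichlet_deriv_1_at_0[of n] in simp)
  also have "\<dots> \<le> \<epsilon> * (2 * pi * real n)"
    using sum_abs_dirichlet_deriv_tail_at_node[OF j, of 1] by simp
  also have "\<dots> \<le> \<epsilon> * (2 * sqrt \<kappa>)"
    using two_pi_n_le_sqrt_curvature[of n] \<epsilon>_nonneg by (intro mult_left_mono) auto
  finally show ?thesis using \<kappa>_pos by (simp add: sum_divide_distrib[symmetric] abs_divide divide_le_eq)
qed

lemma sum_abs_dirichlet_deriv_2_row_le: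
  assumes j: "j < m"
  shows "(\<Sum>k\<in>{..<m} - {j}. \<bar>- dirichlet_deriv 2 n (\<tau> j - \<tau> k) / \<kappa>\<bar>) \<le> 3 * \<epsilon>"
proof -
  have "(\<Sum>k\<in>{..<m} - {j}. \<bar>dirichlet_deriv 2 n (\<tau> j - \<tau> k)\<bar>) \<le> \<epsilon> * (2 * pi * real n) ^ 2"
    by (rule sum_abs_dirichlet_deriv_tail_at_node[OF j])
  also have "\<dots> \<le> \<epsilon> * (3 * \<kappa>)"
    using two_pi_n_squared_le_curvature[of n] \<epsilon>_nonneg by (intro mult_left_mono) auto
  finally show ?thesis using \<kappa>_pos by (simp add: sum_divide_distrib[symmetric] abs_divide divide_le_eq)
qed

lemma interpolation_matrix_upper_row:
  assumes j: "j < m"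
  shows "interpolation_matrix n m \<tau> $$ (j, j) = 1"
    and "(\<Sum>k\<in>{..<m + m} - {j}. cmod (interpolation_matrix n m \<tau> $$ (j, k))) \<le> 5 * \<epsilon>"
proof -
  let ?M = "interpolation_matrix n m \<tau>"
  show "?M $$ (j, j) = 1" using j dirichlet_deriv_0_at_0[of n] by (simp add: interpolation_matrix_index)
  have "(\<Sum>k\<in>{..<m} - {j}. cmod (?M $$ (j, k))) = (\<Sum>k\<in>{..<m} - {j}. \<bar>dirichlet_deriv 0 n (\<tau> j - \<tau> k)\<bar>)"
    using j by (intro sum.cong) (auto simp: interpolation_matrix_index norm_divide)
  moreover have "(\<Sum>k<m. cmod (?M $$ (j, m + k))) = (\<Sum>k<m. \<bar>dirichlet_deriv 1 n (\<tau> j - \<tau> k) / sqrt \<kappa>\<bar>)"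
    using j by (intro sum.cong) (auto simp: interpolation_matrix_index norm_divide)
  ultimately show "(\<Sum>k\<in>{..<m + m} - {j}. cmod (?M $$ (j, k))) \<le> 5 * \<epsilon>"
    using sum_abs_dirichlet_deriv_tail_at_node[OF j, of 0] sum_abs_dirichlet_deriv_1_row_le[OF j] \<epsilon>_nonneg
    unfolding sum_lessThan_add_remove(1)[OF j] by simp
qed

lemma interpolation_matrix_lower_row:
  assumes j: "j < m"
  shows "interpolation_matrix n m \<tau> $$ (m + j, m + j) = 1"
    and "(\<Sum>k\<in>{..<m + m} - {m + j}. cmod (interpolation_matrix n m \<tau> $$ (m + j, k))) \<le> 5 * \<epsilon>"
proof -
  let ?M = "interpolation_matrix n m \<tau>"
  show "?M $$ (m + j, m + j) = 1"
    using j \<kappa>_pos dirichlet_deriv_2_at_0[of n] by (simp add: interpolation_matrix_index)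
  have "(\<Sum>k<m. cmod (?M $$ (m + j, k))) = (\<Sum>k<m. \<bar>dirichlet_deriv 1 n (\<tau> j - \<tau> k) / sqrt \<kappa>\<bar>)"
    using j by (intro sum.cong) (auto simp: interpolation_matrix_index norm_divide)
  moreover have "(\<Sum>k\<in>{..<m} - {j}. cmod (?M $$ (m + j, m + k)))
      = (\<Sum>k\<in>{..<m} - {j}. \<bar>- dirichlet_deriv 2 n (\<tau> j - \<tau> k) / \<kappa>\<bar>)"
    using j by (intro sum.cong) (auto simp: interpolation_matrix_index norm_divide)
  ultimately show "(\<Sum>k\<in>{..<m + m} - {m + j}. cmod (?M $$ (m + j, k))) \<le> 5 * \<epsilon>"
    using sum_abs_dirichlet_deriv_1_row_le[OF j] sum_abs_dirichlet_deriv_2_row_le[OF j]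
    unfolding sum_lessThan_add_remove(2)[OF j] by linarith
qed

lemma interpolation_matrix_unit_diag_dominant:
  "unit_diag_dominant (5 * \<epsilon>) (interpolation_matrix n m \<tau>)"
  unfolding unit_diag_dominant_def
proof (intro allI impI)
  let ?M = "interpolation_matrix n m \<tau>"
  fix i assume "i < dim_row ?M"
  then have i: "i < m + m" using interpolation_matrix_carrier[of n m \<tau>] by simp
  have "dim_col ?M = m + m" using interpolation_matrix_carrier[of n m \<tau>] by simp
  moreover have "?M $$ (i, i) = 1 \<and> (\<Sum>k\<in>{..<m + m} - {i}. cmod (?M $$ (i, k))) \<le> 5 * \<epsilon>"
  proof (cases "i < m")
    case True
    then show ?thesis using interpolation_matrix_upper_row by simp
  next
    case False
    then show ?thesis using interpolation_matrix_lower_row[of "i - m"] i by simp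
  qed
  ultimately show "?M $$ (i, i) = 1 \<and> (\<Sum>k\<in>{..<dim_col ?M} - {i}. cmod (?M $$ (i, k))) \<le> 5 * \<epsilon>"
    by simp
qed

lemma interpolation_matrix_invertible: "invertible_mat (interpolation_matrix n m \<tau>)"
  using \<epsilon>_le by (intro unit_diag_dominant_invertible[OF interpolation_matrix_carrier
      interpolation_matrix_unit_diag_dominant]) simp

lemma interpolation_system_unique:
  "\<exists>!ab. fst ab \<in> carrier_vec m \<and> snd ab \<in> carrier_vec m \<and>
     interpolation_matrix n m \<tau> *\<^sub>v (fst ab @\<^sub>v (complex_of_real (sqrt (cmod (dirichlet2 n 0))) \<cdot>\<^sub>v snd ab))
       = vec m (\<lambda>_. 1) @\<^sub>v 0\<^sub>v m"
proof -
  let ?M = "interpolation_matrix n m \<tau>" and ?c = "complex_of_real (sqrt (cmod (dirichlet2 n 0)))"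
  let ?r = "vec m (\<lambda>_. 1) @\<^sub>v 0\<^sub>v m :: complex vec"
  note dominant = interpolation_matrix_carrier interpolation_matrix_unit_diag_dominant
  have "5 * \<epsilon> < 1" using \<epsilon>_le by simp
  have c: "?c \<noteq> 0" using \<kappa>_pos by (simp add: cmod_dirichlet2_0)
  obtain z where z: "z \<in> carrier_vec (m + m)" "?M *\<^sub>v z = ?r"
    using unit_diag_dominant_solvable[OF dominant \<open>5 * \<epsilon> < 1\<close>, of ?r] by auto
  define a where "a = vec_first z m"
  define b where "b = inverse ?c \<cdot>\<^sub>v vec_last z m"
  have "?c \<cdot>\<^sub>v b = vec_last z m" unfolding b_def using c by (simp add: smult_smult_assoc)
  then have sol: "a \<in> carrier_vec m \<and> b \<in> carrier_vec m \<and> ?M *\<^sub>v (a @\<^sub>v (?c \<cdot>\<^sub>v b)) = ?r"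
    using z unfolding a_def by (simp add: b_def)
  show ?thesis
  proof (rule ex1I[of _ "(a, b)"])
    fix ab assume "fst ab \<in> carrier_vec m \<and> snd ab \<in> carrier_vec m \<and> ?M *\<^sub>v (fst ab @\<^sub>v (?c \<cdot>\<^sub>v snd ab)) = ?r"
    then have "fst ab @\<^sub>v (?c \<cdot>\<^sub>v snd ab) = a @\<^sub>v (?c \<cdot>\<^sub>v b)" and ab: "fst ab \<in> carrier_vec m" "snd ab \<in> carrier_vec m"
      using sol unit_diag_dominant_mult_vec_inj[OF dominant \<open>5 * \<epsilon> < 1\<close>, of "fst ab @\<^sub>v (?c \<cdot>\<^sub>v snd ab)" "a @\<^sub>v (?c \<cdot>\<^sub>v b)"]
      by auto
    then have "fst ab = a" "?c \<cdot>\<^sub>v snd ab = ?c \<cdot>\<^sub>v b" using sol by auto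
    moreover have "snd ab = b"
      using arg_cong[OF \<open>?c \<cdot>\<^sub>v snd ab = ?c \<cdot>\<^sub>v b\<close>, of "\<lambda>v. inverse ?c \<cdot>\<^sub>v v"] c
      by (simp add: smult_smult_assoc)
    ultimately show "ab = (a, b)" by (simp add: prod_eq_iff)
  qed (use sol in simp)
qed

lemma interpolation_solution_real_close:
  fixes v :: "complex vec"
  assumes v: "v \<in> carrier_vec (m + m)" and sys: "interpolation_matrix n m \<tau> *\<^sub>v v = vec m (\<lambda>_. 1) @\<^sub>v 0\<^sub>v m"
    and i: "i < m + m"
  shows "Im (v $ i) = 0" and "cmod (v $ i - (vec m (\<lambda>_. 1) @\<^sub>v 0\<^sub>v m) $ i) \<le> 10 * \<epsilon>"
proof -
  note dominant = interpolation_matrix_carrier interpolation_matrix_unit_diag_dominant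
  have "5 * \<epsilon> < 1" using \<epsilon>_le by simp
  show "Im (v $ i) = 0"
    using unit_diag_dominant_real_solution[OF dominant \<open>5 * \<epsilon> < 1\<close> interpolation_matrix_real v sys _ i]
    by simp
  have "cmod ((vec m (\<lambda>_. 1) @\<^sub>v 0\<^sub>v m) $ k) \<le> 1" if "k < m + m" for k
    using that by simp
  then have "cmod (v $ i - (vec m (\<lambda>_. 1) @\<^sub>v 0\<^sub>v m) $ i) \<le> 5 * \<epsilon> * 1 / (1 - 5 * \<epsilon>)"
    by (rule unit_diag_dominant_solution_close[OF dominant \<open>5 * \<epsilon> < 1\<close> v sys _ i])
  also have "\<dots> \<le> 10 * \<epsilon>"
  proof -
    have "\<epsilon> * (\<epsilon> * 10) \<le> \<epsilon>" using \<epsilon>_nonneg \<epsilon>_le mult_left_mono[of "\<epsilon> * 10" 1 \<epsilon>] by simp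
    then show ?thesis using \<epsilon>_le by (simp add: field_simps)
  qed
  finally show "cmod (v $ i - (vec m (\<lambda>_. 1) @\<^sub>v 0\<^sub>v m) $ i) \<le> 10 * \<epsilon>" .
qed

abbreviation \<rho> :: real where "\<rho> \<equiv> 1 / (4 * real (2 * n + 1))"

definition \<eta> :: "nat \<Rightarrow> (nat \<Rightarrow> real) \<Rightarrow> (nat \<Rightarrow> real) \<Rightarrow> real \<Rightarrow> real" where
  "\<eta> p a b \<theta> = (\<Sum>k<m. a k * dirichlet_deriv p n (\<theta> - \<tau> k) + b k * dirichlet_deriv (Suc p) n (\<theta> - \<tau> k))"

lemma \<eta>_has_real_derivative:
  "((\<lambda>t. \<eta> p a b (s + t)) has_real_derivative \<eta> (Suc p) a b (s + t)) (at t)"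
  unfolding \<eta>_def by (auto intro!: derivative_eq_intros dirichlet_deriv_chain simp: mult.commute)

lemma \<eta>_add_of_int: "\<eta> p a b (\<theta> + of_int r) = \<eta> p a b \<theta>"
proof -
  have "\<theta> + of_int r - \<tau> k = (\<theta> - \<tau> k) + of_int r" for k by simp
  then show ?thesis unfolding \<eta>_def by (simp only: dirichlet_deriv_add_of_int)
qed

lemma \<eta>_split:
  assumes "j < m"
  shows "\<eta> p a b \<theta> = a j * dirichlet_deriv p n (\<theta> - \<tau> j) + b j * dirichlet_deriv (Suc p) n (\<theta> - \<tau> j)
    + (\<Sum>k\<in>{..<m} - {j}. a k * dirichlet_deriv p n (\<theta> - \<tau> k) + b k * dirichlet_deriv (Suc p) n (\<theta> - \<tau> k))"
  unfolding \<eta>_def using assms by (simp add: sum.remove)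

lemma near_node_far_from_others:
  assumes j: "j < m" and t: "\<bar>t\<bar> \<le> \<rho>" and k: "k \<in> {..<m} - {j}"
  shows "\<Delta> / 2 \<le> abs_mod1 (\<tau> j + t - \<tau> k)"
proof -
  have "2 \<le> m" using j k by auto
  have "\<Delta> \<le> abs_mod1 (\<tau> j - \<tau> k)" unfolding \<Delta>_def using separated j k by auto
  also have "\<dots> \<le> abs_mod1 (\<tau> j - (\<tau> j + t)) + abs_mod1 (\<tau> j + t - \<tau> k)"
    by (rule abs_mod1_diff_triangle)
  also have "abs_mod1 (\<tau> j - (\<tau> j + t)) \<le> \<bar>t\<bar>" using abs_mod1_le[of "\<tau> j - (\<tau> j + t)" 0] by simp
  finally have "\<Delta> \<le> \<bar>t\<bar> + abs_mod1 (\<tau> j + t - \<tau> k)" by simp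
  moreover have "2 * \<rho> \<le> 1 / real n" using n_pos by (simp add: field_simps)
  ultimately show ?thesis using t at_least_two_nodes(3)[OF \<open>2 \<le> m\<close>] by linarith
qed

lemma nearest_node_far_from_others:
  assumes j: "j < m" and nearest: "\<And>k. k < m \<Longrightarrow> abs_mod1 (\<theta> - \<tau> j) \<le> abs_mod1 (\<theta> - \<tau> k)"
    and k: "k \<in> {..<m} - {j}"
  shows "\<Delta> / 2 \<le> abs_mod1 (\<theta> - \<tau> k)"
proof -
  have "\<Delta> \<le> abs_mod1 (\<tau> j - \<tau> k)" unfolding \<Delta>_def using separated j k by auto
  also have "\<dots> \<le> abs_mod1 (\<tau> j - \<theta>) + abs_mod1 (\<theta> - \<tau> k)" by (rule abs_mod1_diff_triangle)
  finally show ?thesis using nearest[of k] k abs_mod1_minus_commute[of "\<tau> j" \<theta>] by simp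
qed

lemma Re_interpolation_matrix_mult_vec:
  fixes a b :: "complex vec"
  assumes a: "a \<in> carrier_vec m" and b: "b \<in> carrier_vec m" and j: "j < m"
  defines "v \<equiv> a @\<^sub>v (complex_of_real (sqrt \<kappa>) \<cdot>\<^sub>v b)"
  shows "Re ((interpolation_matrix n m \<tau> *\<^sub>v v) $ j) = \<eta> 0 (\<lambda>k. Re (a $ k)) (\<lambda>k. Re (b $ k)) (\<tau> j)"
    and "Re ((interpolation_matrix n m \<tau> *\<^sub>v v) $ (m + j))
           = - \<eta> 1 (\<lambda>k. Re (a $ k)) (\<lambda>k. Re (b $ k)) (\<tau> j) / sqrt \<kappa>"
proof -
  have sb: "complex_of_real (sqrt \<kappa>) \<cdot>\<^sub>v b \<in> carrier_vec m" using b by simp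
  show "Re ((interpolation_matrix n m \<tau> *\<^sub>v v) $ j) = \<eta> 0 (\<lambda>k. Re (a $ k)) (\<lambda>k. Re (b $ k)) (\<tau> j)"
    unfolding v_def interpolation_matrix_mult_vec(1)[OF a sb j] \<eta>_def Re_sum
    using b \<kappa>_pos by (intro sum.cong) auto
  have "Re ((interpolation_matrix n m \<tau> *\<^sub>v v) $ (m + j))
      = - (\<Sum>k<m. (Re (a $ k) * dirichlet_deriv 1 n (\<tau> j - \<tau> k)
                    + Re (b $ k) * dirichlet_deriv 2 n (\<tau> j - \<tau> k)) / sqrt \<kappa>)"
    unfolding v_def interpolation_matrix_mult_vec(2)[OF a sb j] uminus_complex.sel(1) Re_sum
    using b \<kappa>_pos by (intro arg_cong[where f = uminus] sum.cong) (auto simp: field_simps)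
  also have "\<dots> = - \<eta> 1 (\<lambda>k. Re (a $ k)) (\<lambda>k. Re (b $ k)) (\<tau> j) / sqrt \<kappa>"
    unfolding \<eta>_def by (simp add: sum_divide_distrib numeral_2_eq_2)
  finally show "Re ((interpolation_matrix n m \<tau> *\<^sub>v v) $ (m + j))
           = - \<eta> 1 (\<lambda>k. Re (a $ k)) (\<lambda>k. Re (b $ k)) (\<tau> j) / sqrt \<kappa>" .
qed

lemma interpolation_solution_coefficients:
  fixes a b :: "complex vec"
  assumes a: "a \<in> carrier_vec m" and b: "b \<in> carrier_vec m"
    and sys: "interpolation_matrix n m \<tau> *\<^sub>v (a @\<^sub>v (complex_of_real (sqrt (cmod (dirichlet2 n 0))) \<cdot>\<^sub>v b))
                = vec m (\<lambda>_. 1) @\<^sub>v 0\<^sub>v m"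
  shows "\<And>k. k < m \<Longrightarrow> Im (a $ k) = 0"
    and "\<And>k. k < m \<Longrightarrow> Im (b $ k) = 0"
    and "\<And>k. k < m \<Longrightarrow> \<bar>Re (a $ k) - 1\<bar> \<le> 10 * \<epsilon>"
    and "\<And>k. k < m \<Longrightarrow> sqrt \<kappa> * \<bar>Re (b $ k)\<bar> \<le> 10 * \<epsilon>"
    and "\<And>j. j < m \<Longrightarrow> \<eta> 0 (\<lambda>k. Re (a $ k)) (\<lambda>k. Re (b $ k)) (\<tau> j) = 1"
    and "\<And>j. j < m \<Longrightarrow> \<eta> 1 (\<lambda>k. Re (a $ k)) (\<lambda>k. Re (b $ k)) (\<tau> j) = 0"
proof -
  define v where "v = a @\<^sub>v (complex_of_real (sqrt \<kappa>) \<cdot>\<^sub>v b)"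
  have v: "v \<in> carrier_vec (m + m)" using a b unfolding v_def by simp
  have sys': "interpolation_matrix n m \<tau> *\<^sub>v v = vec m (\<lambda>_. 1) @\<^sub>v 0\<^sub>v m"
    using sys unfolding v_def cmod_dirichlet2_0 .
  have va: "v $ k = a $ k" and vb: "v $ (m + k) = of_real (sqrt \<kappa>) * b $ k" if "k < m" for k
    using that a b unfolding v_def by simp_all
  note real_close = interpolation_solution_real_close[OF v sys']
  show "Im (a $ k) = 0" if "k < m" for k
    using real_close(1)[of k] that va[OF that] by simp
  show b_real: "Im (b $ k) = 0" if "k < m" for k
    using real_close(1)[of "m + k"] that vb[OF that] \<kappa>_pos by simp
  show "\<bar>Re (a $ k) - 1\<bar> \<le> 10 * \<epsilon>" if "k < m" for k
    using real_close(2)[of k] that va[OF that] abs_Re_le_cmod[of "a $ k - 1"] by simp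
  show "sqrt \<kappa> * \<bar>Re (b $ k)\<bar> \<le> 10 * \<epsilon>" if "k < m" for k
    using real_close(2)[of "m + k"] that vb[OF that] \<kappa>_pos cmod_eq_Re[OF b_real[OF that]]
    by (simp add: norm_mult)
  fix j assume j: "j < m"
  show "\<eta> 0 (\<lambda>k. Re (a $ k)) (\<lambda>k. Re (b $ k)) (\<tau> j) = 1"
    using Re_interpolation_matrix_mult_vec(1)[OF a b j] sys' j unfolding v_def by simp
  show "\<eta> 1 (\<lambda>k. Re (a $ k)) (\<lambda>k. Re (b $ k)) (\<tau> j) = 0"
    using Re_interpolation_matrix_mult_vec(2)[OF a b j] sys' j \<kappa>_pos unfolding v_def by simp
qed

lemma sum_dirichlet_eq_\<eta>:
  fixes a b :: "complex vec"
  assumes "\<And>k. k < m \<Longrightarrow> Im (a $ k) = 0" and "\<And>k. k < m \<Longrightarrow> Im (b $ k) = 0"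
  shows "(\<Sum>k<m. a $ k * dirichlet n (\<theta> - \<tau> k)) + (\<Sum>k<m. b $ k * dirichlet1 n (\<theta> - \<tau> k))
           = of_real (\<eta> 0 (\<lambda>k. Re (a $ k)) (\<lambda>k. Re (b $ k)) \<theta>)"
  using assms unfolding complex_eq_iff \<eta>_def dirichlet_eq dirichlet1_eq
  by (simp add: Re_sum Im_sum sum.distrib)

context
  fixes a b :: "nat \<Rightarrow> real"
  assumes a_close: "\<And>k. k < m \<Longrightarrow> \<bar>a k - 1\<bar> \<le> 10 * \<epsilon>"
    and b_small: "\<And>k. k < m \<Longrightarrow> sqrt \<kappa> * \<bar>b k\<bar> \<le> 10 * \<epsilon>"
    and interpolates: "\<And>j. j < m \<Longrightarrow> \<eta> 0 a b (\<tau> j) = 1"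
    and critical: "\<And>j. j < m \<Longrightarrow> \<eta> 1 a b (\<tau> j) = 0"
begin

lemma abs_b_mult_two_pi_n_le:
  assumes "k < m"
  shows "\<bar>b k\<bar> * (2 * pi * real n) \<le> 20 * \<epsilon>"
proof -
  have "\<bar>b k\<bar> * (2 * pi * real n) \<le> \<bar>b k\<bar> * (2 * sqrt \<kappa>)"
    using two_pi_n_le_sqrt_curvature[of n] by (intro mult_left_mono) auto
  also have "\<dots> = 2 * (sqrt \<kappa> * \<bar>b k\<bar>)" by simp
  also have "\<dots> \<le> 20 * \<epsilon>" using b_small[OF assms] by linarith
  finally show ?thesis .
qed

lemma abs_\<eta>_tail_le:
  assumes j: "j < m" and far: "\<And>k. k \<in> {..<m} - {j} \<Longrightarrow> \<Delta> / 2 \<le> abs_mod1 (\<theta> - \<tau> k)"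
  shows "\<bar>\<Sum>k\<in>{..<m} - {j}. a k * dirichlet_deriv p n (\<theta> - \<tau> k) + b k * dirichlet_deriv (Suc p) n (\<theta> - \<tau> k)\<bar>
    \<le> 2 * \<epsilon> * (2 * pi * real n) ^ p"
proof -
  let ?K = "{..<m} - {j}" and ?X = "(2 * pi * real n) ^ p" and ?B = "20 * \<epsilon> / (2 * pi * real n)"
  have pn: "0 < 2 * pi * real n" using n_pos by simp
  have "\<bar>\<Sum>k\<in>?K. a k * dirichlet_deriv p n (\<theta> - \<tau> k) + b k * dirichlet_deriv (Suc p) n (\<theta> - \<tau> k)\<bar>
      \<le> (\<Sum>k\<in>?K. (1 + 10 * \<epsilon>) * \<bar>dirichlet_deriv p n (\<theta> - \<tau> k)\<bar> + ?B * \<bar>dirichlet_deriv (Suc p) n (\<theta> - \<tau> k)\<bar>)"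
  proof (rule order_trans[OF sum_abs sum_mono])
    fix k assume "k \<in> ?K"
    then have "\<bar>a k\<bar> \<le> 1 + 10 * \<epsilon>" "\<bar>b k\<bar> \<le> ?B"
      using a_close[of k] abs_b_mult_two_pi_n_le[of k] pn by (auto simp: field_simps)
    then have "\<bar>a k\<bar> * \<bar>dirichlet_deriv p n (\<theta> - \<tau> k)\<bar> \<le> (1 + 10 * \<epsilon>) * \<bar>dirichlet_deriv p n (\<theta> - \<tau> k)\<bar>"
      and "\<bar>b k\<bar> * \<bar>dirichlet_deriv (Suc p) n (\<theta> - \<tau> k)\<bar> \<le> ?B * \<bar>dirichlet_deriv (Suc p) n (\<theta> - \<tau> k)\<bar>"
      by (intro mult_right_mono; simp)+
    then show "\<bar>a k * dirichlet_deriv p n (\<theta> - \<tau> k) + b k * dirichlet_deriv (Suc p) n (\<theta> - \<tau> k)\<bar>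
      \<le> (1 + 10 * \<epsilon>) * \<bar>dirichlet_deriv p n (\<theta> - \<tau> k)\<bar> + ?B * \<bar>dirichlet_deriv (Suc p) n (\<theta> - \<tau> k)\<bar>"
      using abs_triangle_ineq[of "a k * dirichlet_deriv p n (\<theta> - \<tau> k)" "b k * dirichlet_deriv (Suc p) n (\<theta> - \<tau> k)"]
      unfolding abs_mult by linarith
  qed
  also have "\<dots> = (1 + 10 * \<epsilon>) * (\<Sum>k\<in>?K. \<bar>dirichlet_deriv p n (\<theta> - \<tau> k)\<bar>)
      + ?B * (\<Sum>k\<in>?K. \<bar>dirichlet_deriv (Suc p) n (\<theta> - \<tau> k)\<bar>)"
    by (simp add: sum.distrib sum_distrib_left)
  also have "\<dots> \<le> (1 + 10 * \<epsilon>) * (\<epsilon> * ?X) + ?B * (\<epsilon> * (2 * pi * real n) ^ Suc p)"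
    using sum_abs_dirichlet_deriv_tail[OF j far, of p] sum_abs_dirichlet_deriv_tail[OF j far, of "Suc p"]
      \<epsilon>_nonneg pn
    by (intro add_mono mult_left_mono) auto
  also have "\<dots> = \<epsilon> * ?X * (1 + 30 * \<epsilon>)"
    using pn n_pos by (simp add: field_simps)
  also have "\<dots> \<le> \<epsilon> * ?X * 2"
    using \<epsilon>_nonneg \<epsilon>_le by (intro mult_left_mono) auto
  finally show ?thesis by (simp add: mult_ac)
qed

lemma \<eta>_2_neg_near_node:
  assumes j: "j < m" and t: "\<bar>t\<bar> \<le> \<rho>"
  shows "\<eta> 2 a b (\<tau> j + t) < 0"
proof -
  let ?S = "\<Sum>k\<in>{..<m} - {j}. a k * dirichlet_deriv 2 n (\<tau> j + t - \<tau> k) + b k * dirichlet_deriv 3 n (\<tau> j + t - \<tau> k)"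
  have split: "\<eta> 2 a b (\<tau> j + t) = a j * dirichlet_deriv 2 n t + b j * dirichlet_deriv 3 n t + ?S"
    using \<eta>_split[OF j, of 2 a b "\<tau> j + t"] by (simp add: numeral_3_eq_3)
  have "a j * dirichlet_deriv 2 n t \<le> (1 - 10 * \<epsilon>) * (- \<kappa> / 2)"
  proof -
    have "0 \<le> 1 - 10 * \<epsilon>" "1 - 10 * \<epsilon> \<le> a j" using \<epsilon>_le a_close[OF j] by auto
    moreover have "dirichlet_deriv 2 n t \<le> - \<kappa> / 2" using dirichlet_deriv_2_le_near_0 t by simp
    moreover have "- \<kappa> / 2 \<le> 0" using \<kappa>_pos by simp
    ultimately have "a j * dirichlet_deriv 2 n t \<le> (1 - 10 * \<epsilon>) * dirichlet_deriv 2 n t"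
      and "(1 - 10 * \<epsilon>) * dirichlet_deriv 2 n t \<le> (1 - 10 * \<epsilon>) * (- \<kappa> / 2)"
      by (intro mult_right_mono_neg mult_left_mono; linarith)+
    then show ?thesis by linarith
  qed
  moreover have "\<bar>b j * dirichlet_deriv 3 n t\<bar> \<le> 20 * \<epsilon> * \<kappa>"
  proof -
    have "\<bar>b j * dirichlet_deriv 3 n t\<bar> \<le> \<bar>b j\<bar> * (2 * pi * real n * \<kappa>)"
      unfolding abs_mult by (intro mult_left_mono abs_dirichlet_deriv_3_le) simp
    also have "\<dots> = (\<bar>b j\<bar> * (2 * pi * real n)) * \<kappa>" by (simp add: mult_ac)
    also have "\<dots> \<le> 20 * \<epsilon> * \<kappa>"
      using abs_b_mult_two_pi_n_le[OF j] \<kappa>_pos by (intro mult_right_mono) auto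
    finally show ?thesis .
  qed
  moreover have "\<bar>?S\<bar> \<le> 6 * \<epsilon> * \<kappa>"
  proof -
    have "\<bar>?S\<bar> \<le> 2 * \<epsilon> * (2 * pi * real n) ^ 2"
      using abs_\<eta>_tail_le[OF j near_node_far_from_others[OF j t], of 2] by (simp add: numeral_3_eq_3)
    also have "\<dots> \<le> 2 * \<epsilon> * (3 * \<kappa>)"
      using two_pi_n_squared_le_curvature[of n] \<epsilon>_nonneg by (intro mult_left_mono) auto
    finally show ?thesis by simp
  qed
  moreover have "(1 - 10 * \<epsilon>) * (- \<kappa> / 2) = - \<kappa> / 2 + 5 * \<epsilon> * \<kappa>" by (simp add: algebra_simps)
  moreover have "31 * \<epsilon> * \<kappa> < \<kappa> / 2" using \<epsilon>_le \<kappa>_pos by simp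
  ultimately show ?thesis unfolding split abs_le_iff by linarith
qed

lemma \<eta>_le_1_near_node:
  assumes j: "j < m" and t: "\<bar>t\<bar> \<le> \<rho>"
  shows "\<eta> 0 a b (\<tau> j + t) \<le> 1"
proof -
  define f where "f t = \<eta> 0 a b (\<tau> j + t)" for t
  define g where "g t = \<eta> 1 a b (\<tau> j + t)" for t
  have df: "(f has_real_derivative g x) (at x)" for x
    unfolding f_def g_def using \<eta>_has_real_derivative[of 0] by simp
  have dg: "(g has_real_derivative \<eta> 2 a b (\<tau> j + x)) (at x)" for x
    unfolding g_def using \<eta>_has_real_derivative[of 1] by (simp add: numeral_2_eq_2)
  have f0: "f 0 = 1" and g0: "g 0 = 0" unfolding f_def g_def using interpolates[OF j] critical[OF j] by simp_all
  have neg: "\<eta> 2 a b (\<tau> j + y) < 0" if "\<bar>y\<bar> \<le> \<bar>t\<bar>" for y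
    using \<eta>_2_neg_near_node[OF j] that t by simp
  consider "t = 0" | "0 < t" | "t < 0" by linarith
  then show ?thesis
  proof cases
    case 1
    then show ?thesis using f0 unfolding f_def by simp
  next
    case 2
    obtain z where z: "0 < z" "z < t" "f t - f 0 = (t - 0) * g z"
      using MVT2[OF 2 df] by blast
    obtain y where y: "0 < y" "y < z" "g z - g 0 = (z - 0) * \<eta> 2 a b (\<tau> j + y)"
      using MVT2[OF z(1) dg] by blast
    have "g z < 0" using y neg[of y] z g0 by (simp add: mult_pos_neg)
    then have "(t - 0) * g z < 0" using 2 by (simp add: mult_pos_neg)
    then show ?thesis using z(3) f0 unfolding f_def by linarith
  next
    case 3
    obtain z where z: "t < z" "z < 0" "f 0 - f t = (0 - t) * g z"
      using MVT2[OF 3 df] by blast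
    obtain y where y: "z < y" "y < 0" "g 0 - g z = (0 - z) * \<eta> 2 a b (\<tau> j + y)"
      using MVT2[OF z(2) dg] by blast
    have "0 < z * \<eta> 2 a b (\<tau> j + y)"
      using z y t neg[of y] by (intro mult_neg_neg) auto
    then have "0 < g z" using y(3) g0 by simp
    then have "0 < (0 - t) * g z" using 3 by (simp add: mult_neg_pos)
    then show ?thesis using z(3) f0 unfolding f_def by linarith
  qed
qed

lemma \<eta>_ge_minus_1_near_node:
  assumes j: "j < m" and t: "\<bar>t\<bar> \<le> \<rho>"
  shows "- 1 \<le> \<eta> 0 a b (\<tau> j + t)"
proof -
  let ?S = "\<Sum>k\<in>{..<m} - {j}. a k * dirichlet_deriv 0 n (\<tau> j + t - \<tau> k) + b k * dirichlet_deriv 1 n (\<tau> j + t - \<tau> k)"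
  have split: "\<eta> 0 a b (\<tau> j + t) = a j * dirichlet_deriv 0 n t + b j * dirichlet_deriv 1 n t + ?S"
    using \<eta>_split[OF j, of 0 a b "\<tau> j + t"] by simp
  have "0 \<le> a j" using a_close[OF j] \<epsilon>_le by simp
  then have "0 \<le> a j * dirichlet_deriv 0 n t" using dirichlet_deriv_0_nonneg_near_0 t by simp
  moreover have "\<bar>b j * dirichlet_deriv 1 n t\<bar> \<le> 20 * \<epsilon>"
    using mult_left_mono[OF abs_dirichlet_deriv_1_le[of n t], of "\<bar>b j\<bar>"] abs_b_mult_two_pi_n_le[OF j]
    unfolding abs_mult by linarith
  moreover have "\<bar>?S\<bar> \<le> 2 * \<epsilon>"
    using abs_\<eta>_tail_le[OF j near_node_far_from_others[OF j t], of 0] by simp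
  ultimately show ?thesis using \<epsilon>_le unfolding split abs_le_iff by linarith
qed

lemma abs_\<eta>_le_1_away_from_nodes:
  assumes j: "j < m" and nearest: "\<And>k. k < m \<Longrightarrow> abs_mod1 (\<theta> - \<tau> j) \<le> abs_mod1 (\<theta> - \<tau> k)"
    and away: "\<rho> \<le> abs_mod1 (\<theta> - \<tau> j)"
  shows "\<bar>\<eta> 0 a b \<theta>\<bar> \<le> 1"
proof -
  let ?D = "dirichlet_deriv 0 n (\<theta> - \<tau> j)"
  let ?S = "\<Sum>k\<in>{..<m} - {j}. a k * dirichlet_deriv 0 n (\<theta> - \<tau> k) + b k * dirichlet_deriv 1 n (\<theta> - \<tau> k)"
  have split: "\<eta> 0 a b \<theta> = a j * ?D + b j * dirichlet_deriv 1 n (\<theta> - \<tau> j) + ?S"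
    using \<eta>_split[OF j, of 0 a b \<theta>] by simp
  have "\<bar>a j\<bar> \<le> 1 + 10 * \<epsilon>" using a_close[OF j] by simp
  then have "\<bar>a j * ?D\<bar> \<le> (1 + 10 * \<epsilon>) * \<bar>?D\<bar>" unfolding abs_mult by (rule mult_right_mono) simp
  moreover have "\<bar>b j * dirichlet_deriv 1 n (\<theta> - \<tau> j)\<bar> \<le> 20 * \<epsilon>"
    using mult_left_mono[OF abs_dirichlet_deriv_1_le[of n "\<theta> - \<tau> j"], of "\<bar>b j\<bar>"] abs_b_mult_two_pi_n_le[OF j]
    unfolding abs_mult by linarith
  moreover have "\<bar>?S\<bar> \<le> 2 * \<epsilon>"
    using abs_\<eta>_tail_le[OF j nearest_node_far_from_others[OF j nearest], of 0] by simp
  moreover have "(1 + 10 * \<epsilon>) * \<bar>?D\<bar> + 22 * \<epsilon> \<le> 1"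
  proof (cases "m = 1")
    case True
    then show ?thesis using abs_dirichlet_deriv_0_le[of n] unfolding \<epsilon>_def by simp
  next
    case False
    then have "10 ^ 6 \<le> real n" using at_least_two_nodes(4) m_pos by simp
    then have "\<bar>?D\<bar> \<le> 49 / 50" using away by (intro abs_dirichlet_deriv_0_le_away_from_0) auto
    moreover have "10 * \<epsilon> * \<bar>?D\<bar> \<le> 10 * \<epsilon>"
      using abs_dirichlet_deriv_0_le[of n] \<epsilon>_nonneg by (simp add: mult_left_le)
    ultimately show ?thesis using \<epsilon>_le by (simp add: distrib_right)
  qed
  ultimately show ?thesis unfolding split by linarith
qed

lemma abs_\<eta>_le_1: "\<bar>\<eta> 0 a b \<theta>\<bar> \<le> 1"
proof -
  let ?D = "(\<lambda>k. abs_mod1 (\<theta> - \<tau> k)) ` {..<m}"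
  have "0 \<in> {..<m}" using m_pos by simp
  then have "Min ?D \<in> ?D" by (intro Min_in) auto
  then obtain j where j: "j < m" and min: "Min ?D = abs_mod1 (\<theta> - \<tau> j)" by auto
  have nearest: "abs_mod1 (\<theta> - \<tau> j) \<le> abs_mod1 (\<theta> - \<tau> k)" if "k < m" for k
    using Min_le[of ?D "abs_mod1 (\<theta> - \<tau> k)"] that unfolding min by simp
  show ?thesis
  proof (cases "\<rho> \<le> abs_mod1 (\<theta> - \<tau> j)")
    case True
    then show ?thesis using abs_\<eta>_le_1_away_from_nodes[OF j nearest] by simp
  next
    case False
    define s where "s = (\<theta> - \<tau> j) - of_int (round (\<theta> - \<tau> j))"
    have "\<bar>s\<bar> \<le> \<rho>" using False unfolding s_def abs_mod1_eq_round by simp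
    moreover have "\<eta> 0 a b \<theta> = \<eta> 0 a b (\<tau> j + s)"
      using \<eta>_add_of_int[of 0 a b "\<tau> j + s" "round (\<theta> - \<tau> j)"] unfolding s_def by simp
    ultimately show ?thesis
      using \<eta>_le_1_near_node[OF j] \<eta>_ge_minus_1_near_node[OF j] by (simp add: abs_le_iff)
  qed
qed

end

lemma interpolation_solution_dual_bounds:
  fixes a b :: "complex vec"
  assumes "a \<in> carrier_vec m" "b \<in> carrier_vec m"
    and "interpolation_matrix n m \<tau> *\<^sub>v (a @\<^sub>v (complex_of_real (sqrt (cmod (dirichlet2 n 0))) \<cdot>\<^sub>v b))
           = vec m (\<lambda>_. 1) @\<^sub>v 0\<^sub>v m"
  shows "\<forall>\<theta>\<in>{0..1}. cmod ((\<Sum>k<m. a $ k * dirichlet n (\<theta> - \<tau> k)) + (\<Sum>k<m. b $ k * dirichlet1 n (\<theta> - \<tau> k))) \<le> 1"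
    and "\<forall>j<m. (\<Sum>k<m. a $ k * dirichlet n (\<tau> j - \<tau> k)) + (\<Sum>k<m. b $ k * dirichlet1 n (\<tau> j - \<tau> k)) = 1"
proof -
  note coeffs = interpolation_solution_coefficients[OF assms]
  have dual: "(\<Sum>k<m. a $ k * dirichlet n (\<theta> - \<tau> k)) + (\<Sum>k<m. b $ k * dirichlet1 n (\<theta> - \<tau> k))
      = of_real (\<eta> 0 (\<lambda>k. Re (a $ k)) (\<lambda>k. Re (b $ k)) \<theta>)" for \<theta>
    by (rule sum_dirichlet_eq_\<eta>[OF coeffs(1,2)])
  show "\<forall>\<theta>\<in>{0..1}. cmod ((\<Sum>k<m. a $ k * dirichlet n (\<theta> - \<tau> k)) + (\<Sum>k<m. b $ k * dirichlet1 n (\<theta> - \<tau> k))) \<le> 1"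
    unfolding dual using abs_\<eta>_le_1[OF coeffs(3-6)] by simp
  show "\<forall>j<m. (\<Sum>k<m. a $ k * dirichlet n (\<tau> j - \<tau> k)) + (\<Sum>k<m. b $ k * dirichlet1 n (\<tau> j - \<tau> k)) = 1"
    unfolding dual using coeffs(5) by simp
qed

end

theorem lemma4p1:
  "\<exists>C>0. \<forall>(n::nat) (m::nat) (\<tau>::nat \<Rightarrow> real).
     n \<ge> 1 \<and> m \<ge> 1 \<and> inj_on \<tau> {..<m} \<and> (\<forall>j<m. 0 \<le> \<tau> j \<and> \<tau> j < 1) \<and>
     (\<forall>j<m. \<forall>k<m. j \<noteq> k \<longrightarrow> abs_mod1 (\<tau> j - \<tau> k) \<ge> C * (1 / real n) * ln (real m))
     \<longrightarrow>
     (let c = cmod (dirichlet2 n 0);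
          M = four_block_mat (kmat (dirichlet n) m \<tau>)
                ((complex_of_real (1 / sqrt c)) \<cdot>\<^sub>m kmat (dirichlet1 n) m \<tau>)
                ((- complex_of_real (1 / sqrt c)) \<cdot>\<^sub>m kmat (dirichlet1 n) m \<tau>)
                ((- complex_of_real (1 / c)) \<cdot>\<^sub>m kmat (dirichlet2 n) m \<tau>);
          sys = (\<lambda>a b. a \<in> carrier_vec m \<and> b \<in> carrier_vec m \<and>
                   M *\<^sub>v (a @\<^sub>v (complex_of_real (sqrt c) \<cdot>\<^sub>v b))
                     = vec m (\<lambda>_. 1) @\<^sub>v 0\<^sub>v m)
      in invertible_mat M \<and>
         (\<exists>!ab. sys (fst ab) (snd ab)) \<and>
         (\<forall>a b. sys a b \<longrightarrow>
            (let \<eta> = (\<lambda>\<theta>. (\<Sum>k<m. a $ k * dirichlet n (\<theta> - \<tau> k))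
                            + (\<Sum>k<m. b $ k * dirichlet1 n (\<theta> - \<tau> k)))
             in (\<forall>\<theta>\<in>{0..1}. cmod (\<eta> \<theta>) \<le> 1) \<and> (\<forall>j<m. \<eta> (\<tau> j) = 1))))"
  unfolding Let_def interpolation_matrix_def[symmetric]
proof (rule exI[of _ "10 ^ 6"], rule conjI, simp, intro allI impI, goal_cases)
  case (1 n m \<tau>)
  then interpret separated_nodes n m \<tau> by unfold_locales auto
  show ?case
    using interpolation_matrix_invertible interpolation_system_unique interpolation_solution_dual_bounds
    by blast
qed

end
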